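(* Let $G$ be a reduced adjusted cotorsion abelian group with torsion subgroup $T$. Then $G$ is strongly co-Hopfian if and only if $T$ is strongly co-Hopfian.
   Context: All groups are abelian. A group $G$ is strongly co-Hopfian if for every endomorphism $f$ of $G$ there is $n\in\mathbb N$ with $f^n(G)=f^{n+1}(G)$. A group is cotorsion if $\mathrm{Ext}(\mathbb Q,G)=0$; a reduced cotorsion group is adjusted if it has no non-zero torsion-free direct summand. *)

theory Defs
  imports Main "HOL.Rat"
begin

text \<open>Abelian groups are represented as subgroups (carrier sets) of an ambient
  type of class ab_group_add.\<close>

definition subgrp :: "'a::ab_group_add set \<Rightarrow> bool" where
  "subgrp S \<longleftrightarrow> 0 \<in> S \<and> (\<forall>x\<in>S. \<forall>y\<in>S. x + y \<in> S) \<and> (\<forall>x\<in>S. - x \<in> S)"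

definition natmul :: "nat \<Rightarrow> 'a::ab_group_add \<Rightarrow> 'a" where
  "natmul n x = ((\<lambda>z. z + x) ^^ n) 0"

definition endo_on :: "'a::ab_group_add set \<Rightarrow> ('a \<Rightarrow> 'a) \<Rightarrow> bool" where
  "endo_on S f \<longleftrightarrow> f ` S \<subseteq> S \<and> (\<forall>x\<in>S. \<forall>y\<in>S. f (x + y) = f x + f y)"

definition strongly_coHopfian :: "'a::ab_group_add set \<Rightarrow> bool" where
  "strongly_coHopfian S \<longleftrightarrow>
     (\<forall>f. endo_on S f \<longrightarrow> (\<exists>n::nat. (f ^^ n) ` S = (f ^^ Suc n) ` S))"

definition torsion_part :: "'a::ab_group_add set \<Rightarrow> 'a set" where
  "torsion_part G = {x \<in> G. \<exists>n>0. natmul n x = 0}"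

definition torsion_free :: "'a::ab_group_add set \<Rightarrow> bool" where
  "torsion_free A \<longleftrightarrow> (\<forall>x\<in>A. \<forall>n>0. natmul n x = 0 \<longrightarrow> x = 0)"

definition divisible :: "'a::ab_group_add set \<Rightarrow> bool" where
  "divisible D \<longleftrightarrow> (\<forall>x\<in>D. \<forall>n>0. \<exists>y\<in>D. natmul n y = x)"

definition reduced :: "'a::ab_group_add set \<Rightarrow> bool" where
  "reduced G \<longleftrightarrow> (\<forall>D. subgrp D \<and> D \<subseteq> G \<and> divisible D \<longrightarrow> D = {0})"

definition direct_summand :: "'a::ab_group_add set \<Rightarrow> 'a set \<Rightarrow> bool" where
  "direct_summand A G \<longleftrightarrow> subgrp A \<and> A \<subseteq> G \<and>
     (\<exists>B. subgrp B \<and> B \<subseteq> G \<and> A \<inter> B = {0} \<and> {a + b | a b. a \<in> A \<and> b \<in> B} = G)"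

text \<open>Ext(Q,G) = 0, via the standard description of Ext(Q,G) as symmetric
  2-cocycles Q x Q -> G modulo coboundaries (equivalently: every extension
  0 -> G -> E -> Q -> 0 splits).\<close>
definition Ext_Q_vanishes :: "'a::ab_group_add set \<Rightarrow> bool" where
  "Ext_Q_vanishes G \<longleftrightarrow>
     (\<forall>c :: rat \<Rightarrow> rat \<Rightarrow> 'a.
        (\<forall>r s. c r s \<in> G) \<and> (\<forall>r s. c r s = c s r) \<and>
        (\<forall>r s t. c r s + c (r + s) t = c s t + c r (s + t))
        \<longrightarrow> (\<exists>h :: rat \<Rightarrow> 'a. (\<forall>r. h r \<in> G) \<and> (\<forall>r s. c r s = h r + h s - h (r + s))))"

definition cotorsion :: "'a::ab_group_add set \<Rightarrow> bool" where
  "cotorsion G \<longleftrightarrow> subgrp G \<and> Ext_Q_vanishes G"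

definition adjusted :: "'a::ab_group_add set \<Rightarrow> bool" where
  "adjusted G \<longleftrightarrow> reduced G \<and> cotorsion G \<and>
     (\<forall>A. direct_summand A G \<and> torsion_free A \<longrightarrow> A = {0})"

end

theory Submission
  imports Defs "HOL-Computational_Algebra.Primes"
begin

(*
  Call G split at p if p^k G_p = 0 and G = G_p + p^k G for some k > 0, where G_p is the
  p-primary part; the sum is then direct, giving projections G -> G_p. If G is split at every
  prime, these projections identify G with the product of the G_p: they are jointly injective
  because G is reduced, and jointly surjective because Ext(Q, G) = 0 makes G complete in the
  Z-adic topology. Endomorphisms of G are then families of endomorphisms of the bounded G_p,
  i.e. endomorphisms of T, and the chains f^n G and f^n T stabilise together.

  Each side of the equivalence makes G split at every prime. If G or T is strongly
  co-Hopfian, the chain p^n G (resp. p^n T) stabilises; as G is reduced this bounds G_p, and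
  for G it also yields G = G_p + p^k G. If T is strongly co-Hopfian, the bounded pure subgroup
  G_p has a complement K (Zorn's lemma), and Ext(Q, G) = 0 decomposes G as
  (D \<inter> K) + (G_p + W), where D consists of the elements divisible by every integer prime to p
  and W of those divisible by every power of p. The summand D \<inter> K is torsion-free, so it
  vanishes because G is adjusted, and G = G_p + W \<subseteq> G_p + p^k G.
*)

section \<open>Multiples and primary parts\<close>

lemma natmul_0 [simp]: "natmul 0 x = 0"
  by (simp add: natmul_def)

lemma natmul_Suc: "natmul (Suc n) x = natmul n x + x"
  by (simp add: natmul_def)

lemma natmul_1 [simp]: "natmul (Suc 0) x = x"
  by (simp add: natmul_def)

lemma natmul_add_left: "natmul (m + n) x = natmul m x + natmul n x"
  by (induction n) (simp_all add: natmul_Suc add.assoc)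

lemma natmul_add_right: "natmul n (x + y) = natmul n x + natmul n y"
  by (induction n) (simp_all add: natmul_Suc algebra_simps)

lemma natmul_zero_right [simp]: "natmul n 0 = 0"
  by (induction n) (simp_all add: natmul_Suc)

lemma natmul_minus_right: "natmul n (- x) = - natmul n x"
  by (induction n) (simp_all add: natmul_Suc algebra_simps)

lemma natmul_diff_right: "natmul n (x - y) = natmul n x - natmul n y"
  using natmul_add_right[of n x "- y"] by (simp add: natmul_minus_right)

lemma natmul_mult: "natmul (m * n) x = natmul m (natmul n x)"
  by (induction m) (simp_all add: natmul_Suc natmul_add_left add.commute)

lemma natmul_commute: "natmul m (natmul n x) = natmul n (natmul m x)"
  by (metis natmul_mult mult.commute)

lemma natmul_funpow: "(natmul p ^^ n) x = natmul (p ^ n) x"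
  by (induction n) (simp_all add: natmul_mult)

lemma natmul_eq_0_coprime_inverse:
  assumes "natmul n x = 0" and "coprime d n"
  shows "\<exists>u. natmul d (natmul u x) = x"
proof (cases "d = 0")
  case True
  then show ?thesis using assms by (intro exI[of _ 0]) simp
next
  case False
  obtain u v where "d * u = n * v + gcd d n" using bezout_nat[OF False] by blast
  then have "d * u = v * n + 1" using assms(2) by simp
  then have "natmul (d * u) x = natmul v (natmul n x) + x"
    by (simp add: natmul_Suc natmul_mult[symmetric])
  then show ?thesis using assms(1) by (auto simp: natmul_mult)
qed

lemma subgrp_0: "subgrp G \<Longrightarrow> 0 \<in> G"
  by (simp add: subgrp_def)

lemma subgrp_add: "subgrp G \<Longrightarrow> x \<in> G \<Longrightarrow> y \<in> G \<Longrightarrow> x + y \<in> G"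
  by (simp add: subgrp_def)

lemma subgrp_neg: "subgrp G \<Longrightarrow> x \<in> G \<Longrightarrow> - x \<in> G"
  by (simp add: subgrp_def)

lemma subgrp_diff: "subgrp G \<Longrightarrow> x \<in> G \<Longrightarrow> y \<in> G \<Longrightarrow> x - y \<in> G"
  using subgrp_add[of G x "- y"] subgrp_neg[of G y] by simp

lemma subgrp_natmul: "subgrp G \<Longrightarrow> x \<in> G \<Longrightarrow> natmul n x \<in> G"
  by (induction n) (simp_all add: natmul_Suc subgrp_0 subgrp_add)

lemma subgrp_sum: "subgrp G \<Longrightarrow> (\<And>i. i \<in> A \<Longrightarrow> g i \<in> G) \<Longrightarrow> sum g A \<in> G"
  by (induction A rule: infinite_finite_induct) (simp_all add: subgrp_0 subgrp_add)

lemma subgrp_Int: "subgrp A \<Longrightarrow> subgrp B \<Longrightarrow> subgrp (A \<inter> B)"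
  by (simp add: subgrp_def)

lemma endo_on_add: "endo_on S f \<Longrightarrow> x \<in> S \<Longrightarrow> y \<in> S \<Longrightarrow> f (x + y) = f x + f y"
  by (simp add: endo_on_def)

lemma endo_on_in: "endo_on S f \<Longrightarrow> x \<in> S \<Longrightarrow> f x \<in> S"
  by (auto simp add: endo_on_def)

lemma endo_on_0: "subgrp S \<Longrightarrow> endo_on S f \<Longrightarrow> f 0 = 0"
  using endo_on_add[of S f 0 0] subgrp_0[of S] by simp

lemma endo_on_natmul:
  "subgrp S \<Longrightarrow> endo_on S f \<Longrightarrow> x \<in> S \<Longrightarrow> f (natmul n x) = natmul n (f x)"
  by (induction n) (simp_all add: natmul_Suc endo_on_0 endo_on_add subgrp_natmul)

lemma endo_on_diff:
  assumes "subgrp S" and f: "endo_on S f" and "x \<in> S" and "y \<in> S"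
  shows "f (x - y) = f x - f y"
  using endo_on_add[OF f, of "x - y" y] assms by (simp add: subgrp_diff eq_diff_eq)

lemma endo_on_sum:
  "subgrp S \<Longrightarrow> endo_on S f \<Longrightarrow> (\<And>i. i \<in> A \<Longrightarrow> g i \<in> S) \<Longrightarrow> f (sum g A) = (\<Sum>i\<in>A. f (g i))"
proof (induction A rule: infinite_finite_induct)
  case (insert a A)
  then show ?case by (simp add: endo_on_add subgrp_sum)
qed (simp_all add: endo_on_0)

lemma endo_on_funpow: "endo_on S f \<Longrightarrow> endo_on S (f ^^ n)"
  by (induction n) (auto simp: endo_on_def image_subset_iff)

lemma endo_on_natmul_map: "subgrp S \<Longrightarrow> endo_on S (natmul n)"
  unfolding endo_on_def using subgrp_natmul natmul_add_right by blast

lemma endo_on_image_funpow_Suc_subset: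
  assumes "endo_on S f"
  shows "(f ^^ Suc n) ` S \<subseteq> (f ^^ n) ` S"
proof -
  have "(f ^^ Suc n) ` S = (f ^^ n) ` (f ` S)"
    by (simp only: funpow_Suc_right image_comp)
  also have "\<dots> \<subseteq> (f ^^ n) ` S" using assms by (intro image_mono) (simp add: endo_on_def)
  finally show ?thesis .
qed

definition multiples :: "nat \<Rightarrow> 'a::ab_group_add set \<Rightarrow> 'a set" where
  "multiples n A = natmul n ` A"

lemma natmul_in_multiples: "x \<in> A \<Longrightarrow> natmul n x \<in> multiples n A"
  unfolding multiples_def by blast

lemma multiples_1 [simp]: "multiples (Suc 0) A = A"
  by (simp add: multiples_def)

lemma subgrp_multiples:
  assumes G: "subgrp G"
  shows "subgrp (multiples n G)"
proof -
  have "natmul n x + natmul n y \<in> natmul n ` G" if "x \<in> G" "y \<in> G" for x y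
    using subgrp_add[OF G that] by (metis natmul_add_right image_eqI)
  moreover have "- natmul n x \<in> natmul n ` G" if "x \<in> G" for x
    using subgrp_neg[OF G that] by (metis natmul_minus_right image_eqI)
  ultimately show ?thesis
    unfolding subgrp_def multiples_def using subgrp_0[OF G] by (auto intro!: image_eqI[of 0])
qed

lemma multiples_subset: "subgrp G \<Longrightarrow> multiples n G \<subseteq> G"
  unfolding multiples_def using subgrp_natmul by blast

lemma multiples_natmul_closed: "subgrp G \<Longrightarrow> x \<in> multiples n G \<Longrightarrow> natmul k x \<in> multiples n G"
  unfolding multiples_def by (auto simp: natmul_commute[of k n] subgrp_natmul)

lemma multiples_mult: "multiples (a * b) G = multiples a (multiples b G)"
  unfolding multiples_def by (auto simp: natmul_mult image_image)

lemma multiples_dvd_subset: "subgrp G \<Longrightarrow> d dvd n \<Longrightarrow> multiples n G \<subseteq> multiples d G"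
  unfolding multiples_def by (auto simp: dvd_def natmul_mult subgrp_natmul)

lemma multiples_pow_mono:
  "subgrp G \<Longrightarrow> i \<le> j \<Longrightarrow> multiples (p ^ j) G \<subseteq> multiples (p ^ i) G"
  by (simp add: multiples_dvd_subset le_imp_power_dvd)

lemma image_natmul_funpow: "(natmul p ^^ n) ` G = multiples (p ^ n) G"
  unfolding multiples_def natmul_funpow by simp

lemma multiples_pow_stable:
  assumes "multiples (p ^ N) G = multiples (p ^ Suc N) G"
  shows "multiples (p ^ (N + j)) G = multiples (p ^ N) G"
proof (induction j)
  case (Suc j)
  have "multiples (p ^ (N + Suc j)) G = multiples (p ^ j) (multiples (p ^ Suc N) G)"
    by (simp add: multiples_mult[symmetric] power_add mult_ac)
  also have "\<dots> = multiples (p ^ j) (multiples (p ^ N) G)"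
    by (simp only: assms)
  also have "\<dots> = multiples (p ^ (N + j)) G"
    by (simp add: multiples_mult[symmetric] power_add mult_ac)
  finally show ?case using Suc by simp
qed simp

lemma coprime_natmul_in_multiples:
  assumes G: "subgrp G" and "coprime q n" and y: "y \<in> G" and qy: "natmul q y \<in> multiples n G"
  shows "y \<in> multiples n G"
proof (cases "q = 0")
  case True
  then show ?thesis using assms by (simp add: coprime_commute[of 0])
next
  case False
  obtain a b where "q * a = n * b + gcd q n" using bezout_nat[OF False] by blast
  then have "q * a = n * b + 1" using assms(2) by simp
  then have "natmul (q * a) y = natmul (n * b) y + y"
    by (simp add: natmul_Suc)
  then have "y = natmul a (natmul q y) - natmul n (natmul b y)"
    by (simp add: natmul_mult natmul_commute algebra_simps)
  then show ?thesis
    using subgrp_diff[OF subgrp_multiples[OF G]] multiples_natmul_closed[OF G qy]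
      natmul_in_multiples[OF subgrp_natmul[OF G y]] by metis
qed

definition primary_part :: "nat \<Rightarrow> 'a::ab_group_add set \<Rightarrow> 'a set" where
  "primary_part p G = {x \<in> G. \<exists>j. natmul (p ^ j) x = 0}"

lemma primary_part_subset: "primary_part p G \<subseteq> G"
  unfolding primary_part_def by auto

lemma subgrp_primary_part:
  assumes G: "subgrp G"
  shows "subgrp (primary_part p G)"
proof -
  have "natmul (p ^ (i + j)) (x + y) = 0"
    if "natmul (p ^ i) x = 0" "natmul (p ^ j) y = 0" for x y :: 'a and i j
  proof -
    have "natmul (p ^ (i + j)) (x + y) = natmul (p ^ j) (natmul (p ^ i) x) + natmul (p ^ i) (natmul (p ^ j) y)"
      by (simp add: natmul_add_right power_add natmul_mult natmul_commute[of "p ^ i"])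
    then show ?thesis using that by simp
  qed
  then have "x + y \<in> primary_part p G" if "x \<in> primary_part p G" "y \<in> primary_part p G" for x y
    using that subgrp_add[OF G] unfolding primary_part_def by blast
  moreover have "- x \<in> primary_part p G" if "x \<in> primary_part p G" for x
    using that subgrp_neg[OF G] unfolding primary_part_def by (auto simp: natmul_minus_right)
  moreover have "0 \<in> primary_part p G"
    using subgrp_0[OF G] unfolding primary_part_def by auto
  ultimately show ?thesis unfolding subgrp_def by blast
qed

lemma primary_part_natmul: "subgrp G \<Longrightarrow> x \<in> primary_part p G \<Longrightarrow> natmul k x \<in> primary_part p G"
proof -
  assume G: "subgrp G" and "x \<in> primary_part p G"
  then obtain j where "x \<in> G" "natmul (p ^ j) x = 0" unfolding primary_part_def by auto
  then have "natmul (p ^ j) (natmul k x) = 0" by (simp add: natmul_commute[of "p ^ j"])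
  then show ?thesis using subgrp_natmul[OF G \<open>x \<in> G\<close>] unfolding primary_part_def by blast
qed

lemma primary_part_endo_on:
  assumes S: "subgrp S" and f: "endo_on S f" and x: "x \<in> primary_part p S"
  shows "f x \<in> primary_part p S"
proof -
  obtain j where "x \<in> S" "natmul (p ^ j) x = 0" using x unfolding primary_part_def by auto
  then have "natmul (p ^ j) (f x) = 0" by (simp flip: endo_on_natmul[OF S f] add: endo_on_0[OF S f])
  then show ?thesis using endo_on_in[OF f \<open>x \<in> S\<close>] unfolding primary_part_def by blast
qed

lemma primary_part_of_natmul_pow:
  "g \<in> G \<Longrightarrow> natmul (p ^ a) g \<in> primary_part p G \<Longrightarrow> g \<in> primary_part p G"
  unfolding primary_part_def by (auto simp: natmul_mult[symmetric] power_add[symmetric])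

lemma primary_part_pure:
  "t \<in> primary_part p G \<Longrightarrow> t \<in> multiples (p ^ j) G \<Longrightarrow> t \<in> multiples (p ^ j) (primary_part p G)"
  unfolding multiples_def using primary_part_of_natmul_pow by blast

lemma primary_part_Int_multiples:
  assumes "\<forall>s\<in>primary_part p G. natmul (p ^ k) s = 0"
    and "t \<in> primary_part p G" and "t \<in> multiples (p ^ k) G"
  shows "t = 0"
  using assms(1) primary_part_pure[OF assms(2,3)] unfolding multiples_def by blast

lemma primary_part_coprime_divisible:
  assumes G: "subgrp G" and x: "x \<in> primary_part p G" and "coprime d p"
  shows "\<exists>y\<in>primary_part p G. natmul d y = x"
proof -
  obtain j where "natmul (p ^ j) x = 0" using x unfolding primary_part_def by auto
  moreover have "coprime d (p ^ j)" using \<open>coprime d p\<close> by simp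
  ultimately obtain u where "natmul d (natmul u x) = x" using natmul_eq_0_coprime_inverse by blast
  then show ?thesis using primary_part_natmul[OF G x] by blast
qed

lemma primary_part_in_multiples_coprime:
  "subgrp G \<Longrightarrow> x \<in> primary_part p G \<Longrightarrow> coprime d p \<Longrightarrow> x \<in> multiples d G"
  using primary_part_coprime_divisible[of G x p d] primary_part_subset
  unfolding multiples_def by blast

lemma primary_part_subset_torsion_part:
  "prime p \<Longrightarrow> primary_part p G \<subseteq> torsion_part G"
proof
  fix x assume p: "prime p" and "x \<in> primary_part p G"
  then obtain j where "x \<in> G" "natmul (p ^ j) x = 0" unfolding primary_part_def by auto
  moreover have "p ^ j > 0" using prime_gt_0_nat[OF p] by simp
  ultimately show "x \<in> torsion_part G" unfolding torsion_part_def by blast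
qed

lemma torsion_part_subset: "torsion_part G \<subseteq> G"
  unfolding torsion_part_def by auto

lemma subgrp_torsion_part:
  assumes G: "subgrp G"
  shows "subgrp (torsion_part G)"
proof -
  have *: "natmul (m * n) (x + y) = 0" if "natmul m x = 0" "natmul n y = 0" for x y :: 'a and m n
  proof -
    have "natmul (m * n) (x + y) = natmul n (natmul m x) + natmul m (natmul n y)"
      by (simp add: natmul_add_right natmul_mult natmul_commute[of m])
    then show ?thesis using that by simp
  qed
  have "x + y \<in> torsion_part G" if xy: "x \<in> torsion_part G" "y \<in> torsion_part G" for x y
  proof -
    obtain m n where "m > 0" "n > 0" "x \<in> G" "y \<in> G" "natmul m x = 0" "natmul n y = 0"
      using xy unfolding torsion_part_def by auto
    moreover have "m * n > 0" using calculation by simp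
    ultimately show ?thesis using subgrp_add[OF G] * unfolding torsion_part_def by blast
  qed
  moreover have "- x \<in> torsion_part G" if "x \<in> torsion_part G" for x
    using that subgrp_neg[OF G] unfolding torsion_part_def by (auto simp: natmul_minus_right)
  moreover have "0 \<in> torsion_part G"
    using subgrp_0[OF G] unfolding torsion_part_def by (auto intro: exI[of _ 1])
  ultimately show ?thesis unfolding subgrp_def by blast
qed

lemma endo_on_torsion_part:
  assumes G: "subgrp G" and f: "endo_on G f"
  shows "endo_on (torsion_part G) f"
proof -
  have "f x \<in> torsion_part G" if x: "x \<in> torsion_part G" for x
  proof -
    obtain n where "n > 0" "x \<in> G" "natmul n x = 0" using x unfolding torsion_part_def by auto
    then have "natmul n (f x) = 0" by (simp flip: endo_on_natmul[OF G f] add: endo_on_0[OF G f])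
    then show ?thesis using \<open>n > 0\<close> endo_on_in[OF f \<open>x \<in> G\<close>] unfolding torsion_part_def by blast
  qed
  then show ?thesis using f torsion_part_subset[of G] unfolding endo_on_def by blast
qed

lemma divisible_if_prime_divisible:
  assumes D: "\<And>x q. x \<in> D \<Longrightarrow> prime q \<Longrightarrow> \<exists>y\<in>D. natmul q y = x"
  shows "divisible D"
  unfolding divisible_def
proof (intro ballI allI impI)
  fix x and n :: nat
  assume "x \<in> D" "0 < n"
  then show "\<exists>y\<in>D. natmul n y = x"
  proof (induction n arbitrary: x rule: less_induct)
    case (less n)
    show ?case
    proof (cases "n = 1")
      case True
      then show ?thesis using less.prems by auto
    next
      case False
      then obtain q where q: "prime q" "q dvd n" using prime_factor_nat by blast
      then obtain n' where n': "n = q * n'" by blast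
      then have "n' < n" "0 < n'" using less.prems(2) prime_gt_1_nat[OF q(1)] by auto
      then obtain y where y: "y \<in> D" "natmul n' y = x" using less.IH less.prems(1) by blast
      obtain z where z: "z \<in> D" "natmul q z = y" using D[OF y(1) q(1)] by blast
      have "natmul n z = x" using y z by (simp add: n' mult.commute natmul_mult)
      then show ?thesis using z(1) by blast
    qed
  qed
qed

lemma reduced_subset: "reduced G \<Longrightarrow> H \<subseteq> G \<Longrightarrow> reduced H"
  unfolding reduced_def by blast

lemma primary_part_torsion_part: "prime p \<Longrightarrow> primary_part p (torsion_part G) = primary_part p G"
  using primary_part_subset_torsion_part[of p G] torsion_part_subset[of G]
  unfolding primary_part_def by blast

lemma strongly_coHopfian_multiples_stable:
  assumes "subgrp H" and "strongly_coHopfian H"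
  shows "\<exists>N. multiples (p ^ N) H = multiples (p ^ Suc N) H"
proof -
  obtain N where "(natmul p ^^ N) ` H = (natmul p ^^ Suc N) ` H"
    using assms endo_on_natmul_map[of H p] unfolding strongly_coHopfian_def by blast
  then show ?thesis unfolding image_natmul_funpow by blast
qed

lemma primary_part_multiples_stable:
  assumes G: "subgrp G" and N: "multiples (p ^ N) G = multiples (p ^ Suc N) G"
  shows "multiples (p ^ N) (primary_part p G) = multiples (p ^ Suc N) (primary_part p G)"
proof
  show "multiples (p ^ N) (primary_part p G) \<subseteq> multiples (p ^ Suc N) (primary_part p G)"
  proof
    fix x assume x: "x \<in> multiples (p ^ N) (primary_part p G)"
    then obtain t where t: "t \<in> primary_part p G" "x = natmul (p ^ N) t"
      unfolding multiples_def by auto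
    have "x \<in> primary_part p G" using primary_part_natmul[OF G t(1)] t(2) by simp
    moreover have "x \<in> multiples (p ^ Suc N) G"
      using N natmul_in_multiples[of t G] t primary_part_subset by blast
    ultimately show "x \<in> multiples (p ^ Suc N) (primary_part p G)" by (rule primary_part_pure)
  qed
next
  show "multiples (p ^ Suc N) (primary_part p G) \<subseteq> multiples (p ^ N) (primary_part p G)"
    by (rule multiples_pow_mono[OF subgrp_primary_part[OF G]]) simp
qed

lemma reduced_primary_part_bounded:
  assumes G: "subgrp G" and red: "reduced G" and p: "prime p"
    and N: "multiples (p ^ N) (primary_part p G) = multiples (p ^ Suc N) (primary_part p G)"
  shows "\<forall>t\<in>primary_part p G. natmul (p ^ N) t = 0"
proof -
  define P where "P = primary_part p G"
  define D where "D = multiples (p ^ N) P"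
  have sP: "subgrp P" unfolding P_def using subgrp_primary_part[OF G] .
  have "\<exists>y\<in>D. natmul q y = x" if x: "x \<in> D" and q: "prime q" for x q
  proof (cases "q = p")
    case True
    have "multiples p D = multiples (p ^ Suc N) P" by (simp add: D_def multiples_mult[symmetric])
    then have "D = multiples p D" using N unfolding D_def P_def by simp
    then have "x \<in> natmul p ` D" using x unfolding multiples_def by simp
    then show ?thesis using True by blast
  next
    case False
    obtain t where t: "t \<in> P" "x = natmul (p ^ N) t" using x unfolding D_def multiples_def by auto
    have "coprime q p" using primes_coprime[OF q p False] .
    then obtain s where "s \<in> P" "natmul q s = t"
      using primary_part_coprime_divisible[OF G] t(1) unfolding P_def by blast
    then have "natmul (p ^ N) s \<in> D" "natmul q (natmul (p ^ N) s) = x"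
      using t(2) by (auto simp: D_def natmul_in_multiples natmul_commute[of q])
    then show ?thesis by blast
  qed
  then have "divisible D" by (rule divisible_if_prime_divisible)
  moreover have "subgrp D" "D \<subseteq> G"
    unfolding D_def using subgrp_multiples[OF sP] multiples_subset[OF sP] primary_part_subset[of p G]
    by (auto simp: P_def)
  ultimately have "D = {0}" using red unfolding reduced_def by blast
  then show ?thesis unfolding D_def P_def multiples_def by auto
qed

lemma strongly_coHopfian_primary_part_bounded:
  assumes "subgrp H" and "reduced H" and "strongly_coHopfian H" and "prime p"
  shows "\<exists>k. \<forall>t\<in>primary_part p H. natmul (p ^ k) t = 0"
  using strongly_coHopfian_multiples_stable[OF assms(1,3)]
    reduced_primary_part_bounded[OF assms(1,2,4) primary_part_multiples_stable[OF assms(1)]]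
  by blast

lemma bounded_primary_part_divide:
  assumes G: "subgrp G" and bnd: "\<forall>t\<in>primary_part q G. natmul (q ^ k) t = 0"
    and g: "g \<in> G" and x: "natmul (q ^ Suc k) g \<in> multiples (q ^ (Suc k + j)) G"
  shows "natmul (q ^ k) g \<in> multiples (q ^ j) G"
proof -
  obtain g' where g': "g' \<in> G" "natmul (q ^ Suc k) g = natmul (q ^ (Suc k + j)) g'"
    using x unfolding multiples_def by auto
  define z where "z = g - natmul (q ^ j) g'"
  have "natmul (q ^ Suc k) z = 0"
    using g'(2) by (simp add: z_def natmul_diff_right natmul_mult[symmetric] power_add mult_ac)
  moreover have "z \<in> G" unfolding z_def using G g g'(1) by (simp add: subgrp_diff subgrp_natmul)
  ultimately have "natmul (q ^ k) z = 0" using bnd unfolding primary_part_def by blast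
  then have "natmul (q ^ k) g = natmul (q ^ j) (natmul (q ^ k) g')"
    by (simp add: z_def natmul_diff_right natmul_commute[of "q ^ k"])
  then show ?thesis using natmul_in_multiples subgrp_natmul[OF G g'(1)] by metis
qed

definition prime_power_divisible_part :: "'a::ab_group_add set \<Rightarrow> 'a set" where
  "prime_power_divisible_part G = {x \<in> G. \<forall>q j. prime q \<longrightarrow> x \<in> multiples (q ^ j) G}"

lemma subgrp_prime_power_divisible_part:
  assumes G: "subgrp G"
  shows "subgrp (prime_power_divisible_part G)"
  using G subgrp_multiples[OF G]
  unfolding subgrp_def prime_power_divisible_part_def by blast

lemma prime_power_divisible_part_divide:
  assumes G: "subgrp G" and q: "prime q" and bnd: "\<forall>t\<in>primary_part q G. natmul (q ^ k) t = 0"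
    and x: "x \<in> prime_power_divisible_part G"
  shows "\<exists>y\<in>prime_power_divisible_part G. natmul q y = x"
proof -
  have xV: "x \<in> multiples (r ^ j) G" if "prime r" for r j
    using x that unfolding prime_power_divisible_part_def by blast
  obtain g where g: "g \<in> G" "x = natmul (q ^ Suc k) g"
    using xV[OF q, of "Suc k"] unfolding multiples_def by auto
  define y where "y = natmul (q ^ k) g"
  have qy: "natmul q y = x" unfolding y_def g(2) by (simp add: natmul_mult)
  have "y \<in> multiples (r ^ j) G" if r: "prime r" for r j
  proof (cases "r = q")
    case True
    then show ?thesis
      unfolding y_def using bounded_primary_part_divide[OF G bnd g(1)] xV[OF q] g(2) by metis
  next
    case False
    have "coprime q (r ^ j)" using primes_coprime[OF q r] False by simp
    then show ?thesis
      using coprime_natmul_in_multiples[OF G] qy xV[OF r] subgrp_natmul[OF G g(1)] y_def by metis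
  qed
  then have "y \<in> prime_power_divisible_part G"
    unfolding prime_power_divisible_part_def y_def using subgrp_natmul[OF G g(1)] by blast
  then show ?thesis using qy by blast
qed

lemma reduced_prime_power_divisible_eq_0:
  assumes G: "subgrp G" and red: "reduced G"
    and bnd: "\<And>q. prime q \<Longrightarrow> \<exists>k. \<forall>t\<in>primary_part q G. natmul (q ^ k) t = 0"
    and x: "x \<in> G" and xV: "\<And>q j. prime q \<Longrightarrow> x \<in> multiples (q ^ j) G"
  shows "x = 0"
proof -
  define V where "V = prime_power_divisible_part G"
  have "divisible V"
    using prime_power_divisible_part_divide[OF G] bnd unfolding V_def
    by (metis divisible_if_prime_divisible)
  moreover have "subgrp V" "V \<subseteq> G"
    unfolding V_def prime_power_divisible_part_def using subgrp_prime_power_divisible_part[OF G]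
    by (auto simp: prime_power_divisible_part_def)
  ultimately have "V = {0}" using red unfolding reduced_def by blast
  moreover have "x \<in> V" unfolding V_def prime_power_divisible_part_def using x xV by blast
  ultimately show ?thesis by blast
qed

section \<open>Cotorsion groups are complete\<close>

definition intmul :: "int \<Rightarrow> 'a::ab_group_add \<Rightarrow> 'a" where
  "intmul k x = natmul (nat k) x - natmul (nat (- k)) x"

lemma intmul_add_left: "intmul (k + l) x = intmul k x + intmul l x"
proof -
  have "natmul (nat (k + l)) x + natmul (nat (- k) + nat (- l)) x
      = natmul (nat (- (k + l))) x + natmul (nat k + nat l) x"
    by (simp only: natmul_add_left[symmetric]) (rule arg_cong[where f = "\<lambda>n. natmul n x"], linarith)
  then show ?thesis unfolding intmul_def by (simp add: natmul_add_left algebra_simps)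
qed

lemma intmul_1 [simp]: "intmul 1 x = x"
  by (simp add: intmul_def)

lemma subgrp_intmul: "subgrp G \<Longrightarrow> x \<in> G \<Longrightarrow> intmul k x \<in> G"
  unfolding intmul_def by (intro subgrp_diff subgrp_natmul)

lemma prod_lessThan_dvd_mono: "n \<le> n' \<Longrightarrow> prod m {..<n} dvd prod m {..<n' :: nat}"
  by (rule prod_dvd_prod_subset) auto

text \<open>
  Write \<open>N\<^sub>n = m\<^sub>0 \<cdots> m\<^sub>n\<^sub>-\<^sub>1\<close>. Once \<open>L\<close> is beyond the denominator levels of \<open>r\<close> and \<open>s\<close>,
  the defect \<open>trunc_sum (r + s) L - trunc_sum r L - trunc_sum s L\<close> no longer depends on \<open>L\<close>.
  This \<open>carry\<close> is a symmetric 2-cocycle on \<open>\<rat>\<close>, hence a coboundary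
  \<open>h r + h s - h (r + s)\<close> since \<open>Ext(\<rat>, G) = 0\<close>, and \<open>y\<^sub>n = h (1/N\<^sub>n) + trunc_sum (1/N\<^sub>n) n\<close>
  solves \<open>m\<^sub>n y\<^sub>n\<^sub>+\<^sub>1 = y\<^sub>n + c\<^sub>n\<close>.
\<close>
context
  fixes G :: "'a::ab_group_add set" and m :: "nat \<Rightarrow> nat" and c :: "nat \<Rightarrow> 'a"
  assumes G: "subgrp G" and ext: "Ext_Q_vanishes G"
    and m_pos: "\<And>i. m i > 0" and cover: "\<And>d. d > 0 \<Longrightarrow> \<exists>n. d dvd prod m {..<n}"
    and c_in: "\<And>n. c n \<in> G"
begin

definition denom_level :: "rat \<Rightarrow> nat" where
  "denom_level r = (LEAST n. r * of_nat (prod m {..<n}) \<in> \<int>)"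

definition trunc_sum :: "rat \<Rightarrow> nat \<Rightarrow> 'a" where
  "trunc_sum r L = (\<Sum>j<L. if r * of_nat (prod m {..<j}) \<in> \<int>
                           then intmul \<lfloor>r * of_nat (prod m {..<j})\<rfloor> (c j) else 0)"

lemma integral_level_mono:
  assumes r: "r * of_nat (prod m {..<n}) \<in> \<int>" and "n \<le> n'"
  shows "r * of_nat (prod m {..<n'}) \<in> \<int>"
proof -
  obtain q where q: "prod m {..<n'} = prod m {..<n} * q"
    using prod_lessThan_dvd_mono[OF \<open>n \<le> n'\<close>] by blast
  have "r * of_nat (prod m {..<n'}) = (r * of_nat (prod m {..<n})) * of_nat q"
    by (simp add: q mult.assoc)
  then show ?thesis using r by (metis Ints_mult Ints_of_nat)
qed

lemma integral_at_denom_level: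
  assumes "denom_level r \<le> L"
  shows "r * of_nat (prod m {..<L}) \<in> \<int>"
proof -
  obtain a b where "quotient_of r = (a, b)" by (cases "quotient_of r")
  then have b: "b > 0" and r: "r = of_int a / of_int b"
    using quotient_of_denom_pos quotient_of_div by auto
  obtain n q where "prod m {..<n} = nat b * q" using cover[of "nat b"] b by (auto simp: dvd_def)
  then have "r * of_nat (prod m {..<n}) \<in> \<int>" using b by (simp add: r)
  then have "r * of_nat (prod m {..<denom_level r}) \<in> \<int>"
    unfolding denom_level_def by (rule LeastI)
  then show ?thesis using assms by (rule integral_level_mono)
qed

lemma denom_level_le: "r * of_nat (prod m {..<L}) \<in> \<int> \<Longrightarrow> denom_level r \<le> L"
  unfolding denom_level_def by (rule Least_le)

lemma trunc_sum_Suc: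
  "trunc_sum r (Suc L) = trunc_sum r L + (if r * of_nat (prod m {..<L}) \<in> \<int>
                                 then intmul \<lfloor>r * of_nat (prod m {..<L})\<rfloor> (c L) else 0)"
  unfolding trunc_sum_def by simp

lemma trunc_sum_in: "trunc_sum r L \<in> G"
  unfolding trunc_sum_def
  by (rule subgrp_sum[OF G]) (auto simp: subgrp_intmul[OF G c_in] subgrp_0[OF G])

definition carry :: "rat \<Rightarrow> rat \<Rightarrow> 'a" where
  "carry r s = (let L = max (denom_level r) (denom_level s)
                in trunc_sum (r + s) L - trunc_sum r L - trunc_sum s L)"

lemma carry_eq:
  assumes "denom_level r \<le> L" and "denom_level s \<le> L"
  shows "carry r s = trunc_sum (r + s) L - trunc_sum r L - trunc_sum s L"
proof -
  have "max (denom_level r) (denom_level s) \<le> L" using assms by simp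
  then show ?thesis
  proof (induction L rule: dec_induct)
    case base
    then show ?case by (simp add: carry_def Let_def)
  next
    case (step L)
    have r: "r * of_nat (prod m {..<L}) \<in> \<int>" and s: "s * of_nat (prod m {..<L}) \<in> \<int>"
      using step(1) by (simp_all only: integral_at_denom_level max.bounded_iff)
    then have "(r + s) * of_nat (prod m {..<L}) \<in> \<int>" by (simp add: distrib_right)
    moreover have "\<lfloor>(r + s) * of_nat (prod m {..<L})\<rfloor>
        = \<lfloor>r * of_nat (prod m {..<L})\<rfloor> + \<lfloor>s * of_nat (prod m {..<L})\<rfloor>"
      using r s by (auto simp: distrib_right elim!: Ints_cases)
    ultimately show ?case
      using step(3) r s by (simp add: trunc_sum_Suc intmul_add_left algebra_simps)
  qed
qed

lemma carry_cocycle: "carry r s + carry (r + s) t = carry s t + carry r (s + t)"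
proof -
  define L where "L = denom_level r + denom_level s + denom_level t
                      + denom_level (r + s) + denom_level (s + t)"
  have "carry r s = trunc_sum (r + s) L - trunc_sum r L - trunc_sum s L"
    and "carry (r + s) t = trunc_sum (r + s + t) L - trunc_sum (r + s) L - trunc_sum t L"
    and "carry s t = trunc_sum (s + t) L - trunc_sum s L - trunc_sum t L"
    and "carry r (s + t) = trunc_sum (r + (s + t)) L - trunc_sum r L - trunc_sum (s + t) L"
    by (rule carry_eq; simp add: L_def)+
  then show ?thesis by (simp add: add.assoc)
qed

lemma carry_sym: "carry r s = carry s r"
  unfolding carry_def Let_def by (simp add: add.commute max.commute diff_diff_eq)

lemma carry_in: "carry r s \<in> G"
  unfolding carry_def Let_def by (intro subgrp_diff[OF G] trunc_sum_in)

lemma cotorsion_solve_recursion: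
  "\<exists>y. (\<forall>n. y n \<in> G) \<and> (\<forall>n. natmul (m n) (y (Suc n)) = y n + c n)"
proof -
  obtain h where h_in: "\<And>r. h r \<in> G" and h: "\<And>r s. carry r s = h r + h s - h (r + s)"
    using ext carry_in carry_sym carry_cocycle unfolding Ext_Q_vanishes_def by blast
  define \<psi> where "\<psi> L r = h r + trunc_sum r L" for L r
  have \<psi>_add: "\<psi> L (r + s) = \<psi> L r + \<psi> L s" if "denom_level r \<le> L" "denom_level s \<le> L" for L r s
    using h[of r s] carry_eq[OF that] unfolding \<psi>_def by (simp add: algebra_simps)
  have \<psi>_natmul: "natmul i (\<psi> L r) = \<psi> L (of_nat i * r)" if r: "denom_level r \<le> L" for i L r
  proof (induction i)
    case 0
    have "denom_level 0 \<le> L" by (rule denom_level_le) simp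
    then show ?case using \<psi>_add[of 0 L 0] by simp
  next
    case (Suc i)
    have "denom_level (of_nat i * r) \<le> L"
      using integral_at_denom_level[OF r] by (intro denom_level_le) (simp add: mult.assoc)
    then show ?case
      using Suc \<psi>_add[of "of_nat i * r" L r] r by (simp add: natmul_Suc distrib_right add.commute)
  qed
  define y where "y n = \<psi> n (1 / of_nat (prod m {..<n}))" for n
  have N_pos: "prod m {..<n} > 0" for n using m_pos by (simp add: prod_pos)
  have m_nonzero: "m i \<noteq> 0" for i using m_pos[of i] by simp
  have "natmul (m n) (y (Suc n)) = y n + c n" for n
  proof -
    have level: "denom_level (1 / of_nat (prod m {..<Suc n})) \<le> Suc n"
      by (rule denom_level_le) (use N_pos[of "Suc n"] in simp)
    have "of_nat (m n) * (1 / of_nat (prod m {..<Suc n})) = (1 / of_nat (prod m {..<n}) :: rat)"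
      using N_pos[of n] m_pos[of n] by simp
    then have "natmul (m n) (y (Suc n)) = \<psi> (Suc n) (1 / of_nat (prod m {..<n}))"
      unfolding y_def using \<psi>_natmul[OF level, of "m n"] by simp
    also have "\<dots> = y n + c n"
      unfolding \<psi>_def y_def by (simp add: trunc_sum_Suc algebra_simps m_nonzero)
    finally show ?thesis .
  qed
  moreover have "y n \<in> G" for n unfolding y_def \<psi>_def by (intro subgrp_add[OF G] h_in trunc_sum_in)
  ultimately show ?thesis by blast
qed

end

lemma cotorsion_complete:
  fixes G :: "'a::ab_group_add set" and s :: "nat \<Rightarrow> 'a"
  assumes G: "subgrp G" and ext: "Ext_Q_vanishes G"
    and m_pos: "\<And>i. m i > 0" and cover: "\<And>d. d > 0 \<Longrightarrow> \<exists>n. d dvd prod m {..<n}"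
    and s_in: "\<And>n. s n \<in> G" and cauchy: "\<And>n. s (Suc n) - s n \<in> multiples (prod m {..<n}) G"
  shows "\<exists>g\<in>G. \<forall>n. g - s n \<in> multiples (prod m {..<n}) G"
proof -
  obtain b where b_in: "\<And>n. b n \<in> G" and b: "\<And>n. s (Suc n) - s n = natmul (prod m {..<n}) (b n)"
    using cauchy unfolding multiples_def image_iff by metis
  obtain y where y_in: "\<And>n. y n \<in> G" and y: "\<And>n. natmul (m n) (y (Suc n)) = y n - b n"
    using cotorsion_solve_recursion[OF G ext m_pos cover, of "\<lambda>n. - b n"] b_in subgrp_neg[OF G]
    by auto
  define g where "g = s 0 + y 0"
  have g: "g = s n + natmul (prod m {..<n}) (y n)" for n
  proof (induction n)
    case (Suc n)
    have "natmul (prod m {..<Suc n}) (y (Suc n)) = natmul (prod m {..<n}) (y n - b n)"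
      by (simp add: natmul_mult[symmetric] y[symmetric] mult.commute)
    then show ?case using Suc b[of n] by (simp add: natmul_diff_right algebra_simps)
  qed (simp add: g_def)
  then have "g - s n \<in> multiples (prod m {..<n}) G" for n
    using natmul_in_multiples[OF y_in] by (metis add_diff_cancel_left')
  moreover have "g \<in> G" unfolding g_def by (intro subgrp_add[OF G] s_in y_in)
  ultimately show ?thesis by blast
qed

lemma natmul_diff_in_multiples:
  assumes G: "subgrp G" and x: "x \<in> G" and dvd: "int n dvd int a - int b"
  shows "natmul a x - natmul b x \<in> multiples n G"
proof -
  have *: "natmul a x - natmul b x \<in> multiples n G" if ba: "b \<le> a" "int n dvd int a - int b" for a b
  proof -
    have "n dvd a - b" using ba by (simp flip: int_dvd_int_iff)
    then obtain k where "a = b + n * k" using ba(1) by (metis dvdE le_add_diff_inverse)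
    then have "natmul a x - natmul b x = natmul n (natmul k x)"
      by (simp add: natmul_add_left natmul_mult)
    then show ?thesis using natmul_in_multiples[OF subgrp_natmul[OF G x]] by simp
  qed
  show ?thesis
  proof (cases "b \<le> a")
    case True
    then show ?thesis using * dvd by blast
  next
    case False
    then have "natmul b x - natmul a x \<in> multiples n G"
      using * dvd by (simp add: dvd_diff_commute)
    then show ?thesis using subgrp_neg[OF subgrp_multiples[OF G]] by fastforce
  qed
qed

lemma natmul_dvd_in_multiples: "subgrp G \<Longrightarrow> x \<in> G \<Longrightarrow> d dvd a \<Longrightarrow> natmul a x \<in> multiples d G"
proof -
  assume G: "subgrp G" and x: "x \<in> G" and "d dvd a"
  then obtain k where "natmul a x = natmul d (natmul k x)" by (auto simp: dvd_def natmul_mult)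
  then show ?thesis using natmul_in_multiples[OF subgrp_natmul[OF G x]] by simp
qed

definition coprime_factorial :: "nat \<Rightarrow> nat \<Rightarrow> nat" where
  "coprime_factorial p n = (\<Prod>i<n. if coprime (Suc i) p then Suc i else 1)"

lemma coprime_factorial_coprime: "coprime (coprime_factorial p n) p"
  unfolding coprime_factorial_def by (rule prod_coprime_left) simp

lemma dvd_coprime_factorial:
  assumes "coprime d p" and "0 < d" and "d \<le> n"
  shows "d dvd coprime_factorial p n"
proof -
  have "(if coprime (Suc (d - 1)) p then Suc (d - 1) else 1) dvd coprime_factorial p n"
    unfolding coprime_factorial_def by (rule dvd_prodI) (use assms in auto)
  then show ?thesis using assms by simp
qed

lemma coprime_factorial_dvd_Suc: "coprime_factorial p n dvd coprime_factorial p (Suc n)"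
  by (simp add: coprime_factorial_def)

lemma dvd_prime_power_coprime_factorial:
  assumes p: "prime p" and "0 < d"
  shows "\<exists>n. d dvd p ^ n * coprime_factorial p n"
proof -
  obtain d' where d': "d = p ^ multiplicity p d * d'" "\<not> p dvd d'"
    using multiplicity_decompose'[of d p] assms not_prime_unit by blast
  define n where "n = multiplicity p d + d'"
  have "d' > 0" using d' \<open>0 < d\<close> by (auto intro!: Nat.gr0I)
  moreover have "coprime d' p" using prime_imp_coprime[OF p d'(2)] coprime_commute by blast
  ultimately have "d' dvd coprime_factorial p n" by (intro dvd_coprime_factorial) (simp_all add: n_def)
  moreover have "p ^ multiplicity p d dvd p ^ n" by (simp add: n_def le_imp_power_dvd)
  ultimately have "d dvd p ^ n * coprime_factorial p n" by (subst d'(1)) (rule mult_dvd_mono)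
  then show ?thesis by blast
qed

text \<open>Approximations of the idempotent of \<open>\<int>\<^sub>p\<close> in the profinite completion of \<open>\<int>\<close>.\<close>
lemma prime_idempotent_approx:
  assumes p: "prime p"
  shows "\<exists>e. p ^ n dvd e \<and> int (coprime_factorial p n) dvd int e - 1"
proof -
  have "p ^ n \<noteq> 0" using p by (simp add: prime_gt_0_nat)
  then obtain a b where "p ^ n * a = coprime_factorial p n * b + gcd (p ^ n) (coprime_factorial p n)"
    using bezout_nat by blast
  then have "p ^ n * a = coprime_factorial p n * b + 1"
    using coprime_factorial_coprime[of p n] by (simp add: coprime_commute)
  then have "int (coprime_factorial p n) dvd int (p ^ n * a) - 1" by simp
  then show ?thesis by (intro exI[of _ "p ^ n * a"]) simp
qed

lemma cotorsion_idempotent_limit: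
  fixes G :: "'a::ab_group_add set"
  assumes G: "subgrp G" and ext: "Ext_Q_vanishes G" and p: "prime p" and x: "x \<in> G"
    and e_p: "\<And>n. p ^ n dvd e n" and e_R: "\<And>n. int (coprime_factorial p n) dvd int (e n) - 1"
  shows "\<exists>w\<in>G. \<forall>n. w - natmul (e n) x \<in> multiples (p ^ n * coprime_factorial p n) G"
proof -
  define R where "R = coprime_factorial p"
  define m where "m i = p * (if coprime (Suc i) p then Suc i else 1)" for i
  have N_eq: "prod m {..<n} = p ^ n * R n" for n
    unfolding m_def R_def coprime_factorial_def by (simp add: prod.distrib)
  have m_pos: "m i > 0" for i unfolding m_def using prime_gt_0_nat[OF p] by simp
  have cover: "\<exists>n. d dvd prod m {..<n}" if "0 < d" for d
    unfolding N_eq R_def using dvd_prime_power_coprime_factorial[OF p that] .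
  have "natmul (e (Suc n)) x - natmul (e n) x \<in> multiples (prod m {..<n}) G" for n
  proof -
    have "p ^ n dvd e (Suc n)" using e_p[of "Suc n"] by (simp add: dvd_mult_right)
    then have "int (p ^ n) dvd int (e (Suc n)) - int (e n)"
      using e_p[of n] by (intro dvd_diff) (simp_all only: int_dvd_int_iff)
    moreover have "int (R n) dvd int (e (Suc n)) - 1"
      using coprime_factorial_dvd_Suc[of p n] e_R[of "Suc n"] unfolding R_def
      by (meson dvd_trans int_dvd_int_iff)
    then have "int (R n) dvd (int (e (Suc n)) - 1) - (int (e n) - 1)"
      using e_R[of n] unfolding R_def by (rule dvd_diff)
    moreover have "coprime (int (p ^ n)) (int (R n))"
      using coprime_factorial_coprime[of p n] by (simp add: R_def coprime_commute)
    ultimately have "int (prod m {..<n}) dvd int (e (Suc n)) - int (e n)"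
      unfolding N_eq of_nat_mult by (intro divides_mult) simp_all
    then show ?thesis by (rule natmul_diff_in_multiples[OF G x])
  qed
  from cotorsion_complete[OF G ext m_pos cover subgrp_natmul[OF G x] this]
  show ?thesis unfolding N_eq R_def .
qed

lemma cotorsion_prime_decomposition:
  fixes G :: "'a::ab_group_add set"
  assumes G: "subgrp G" and ext: "Ext_Q_vanishes G" and p: "prime p" and x: "x \<in> G"
  shows "\<exists>w\<in>G. (\<forall>n. w \<in> multiples (p ^ n) G) \<and> (\<forall>d. coprime d p \<longrightarrow> x - w \<in> multiples d G)"
proof -
  have "\<forall>n. \<exists>e. p ^ n dvd e \<and> int (coprime_factorial p n) dvd int e - 1"
    using prime_idempotent_approx[OF p] by blast
  from choice[OF this] obtain e where e_p: "\<And>n. p ^ n dvd e n"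
    and e_R: "\<And>n. int (coprime_factorial p n) dvd int (e n) - 1"
    by blast
  obtain w where w: "w \<in> G" "\<And>n. w - natmul (e n) x \<in> multiples (p ^ n * coprime_factorial p n) G"
    using cotorsion_idempotent_limit[OF G ext p x e_p e_R] by blast
  have "w \<in> multiples (p ^ n) G" for n
  proof -
    have "w - natmul (e n) x \<in> multiples (p ^ n) G"
      using subsetD[OF multiples_dvd_subset[OF G] w(2)] by simp
    moreover have "natmul (e n) x \<in> multiples (p ^ n) G" by (rule natmul_dvd_in_multiples[OF G x e_p])
    ultimately have "(w - natmul (e n) x) + natmul (e n) x \<in> multiples (p ^ n) G"
      by (rule subgrp_add[OF subgrp_multiples[OF G]])
    then show ?thesis by simp
  qed
  moreover have "x - w \<in> multiples d G" if d: "coprime d p" for d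
  proof -
    have "d \<noteq> 0" using d p by (cases "d = 0") simp_all
    then have d_R: "d dvd coprime_factorial p d" using dvd_coprime_factorial[OF d] by simp
    then have "w - natmul (e d) x \<in> multiples d G"
      using subsetD[OF multiples_dvd_subset[OF G] w(2)] by simp
    moreover have "int d dvd int (e d) - 1" using d_R e_R[of d] by (meson dvd_trans int_dvd_int_iff)
    then have "natmul 1 x - natmul (e d) x \<in> multiples d G"
      by (intro natmul_diff_in_multiples[OF G x]) (simp add: dvd_diff_commute)
    ultimately have "(natmul 1 x - natmul (e d) x) - (w - natmul (e d) x) \<in> multiples d G"
      using subgrp_diff[OF subgrp_multiples[OF G]] by blast
    then show ?thesis by simp
  qed
  ultimately show ?thesis using w(1) by blast
qed

lemma prod_Suc_lessThan_eq_fact: "prod Suc {..<n} = fact n"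
  by (simp add: fact_prod_Suc atLeast0LessThan)

lemma cotorsion_sum_primary_family:
  fixes G :: "'a::ab_group_add set"
  assumes G: "subgrp G" and ext: "Ext_Q_vanishes G"
    and t: "\<And>p. prime p \<Longrightarrow> t p \<in> primary_part p G"
  shows "\<exists>g\<in>G. \<forall>n. g - (\<Sum>q | prime q \<and> q \<le> n. t q) \<in> multiples (fact n) G"
proof -
  define s where "s n = (\<Sum>q | prime q \<and> q \<le> n. t q)" for n
  have fin: "finite {q. prime q \<and> q \<le> n}" for n :: nat
    by (rule finite_subset[of _ "{..n}"]) auto
  have s_in: "s n \<in> G" for n
    unfolding s_def using t primary_part_subset by (intro subgrp_sum[OF G]) blast
  have cover: "\<exists>n. d dvd prod Suc {..<n}" if "d > 0" for d
    using that dvd_fact[of d d] by (auto simp: prod_Suc_lessThan_eq_fact)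
  have "s (Suc n) - s n \<in> multiples (fact n) G" for n
  proof (cases "prime (Suc n)")
    case True
    have "{q. prime q \<and> q \<le> Suc n} = insert (Suc n) {q. prime q \<and> q \<le> n}"
      using True by (auto simp: le_Suc_eq)
    then have "s (Suc n) - s n = t (Suc n)" unfolding s_def using fin by simp
    moreover have "\<not> Suc n dvd fact n" using prime_dvd_fact_iff[OF True] by simp
    then have "coprime (fact n) (Suc n)"
      using prime_imp_coprime[OF True] coprime_commute by blast
    ultimately show ?thesis
      using primary_part_in_multiples_coprime[OF G t[OF True]] by simp
  next
    case False
    then have "{q. prime q \<and> q \<le> Suc n} = {q. prime q \<and> q \<le> n}" by (auto simp: le_Suc_eq)
    then show ?thesis unfolding s_def using subgrp_0[OF subgrp_multiples[OF G]] by simp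
  qed
  then show ?thesis
    using cotorsion_complete[OF G ext _ cover s_in] unfolding prod_Suc_lessThan_eq_fact s_def
    by auto
qed

section \<open>Splitting at a prime\<close>

definition primary_split :: "'a::ab_group_add set \<Rightarrow> nat \<Rightarrow> nat \<Rightarrow> bool" where
  "primary_split G p k \<longleftrightarrow> 0 < k \<and> (\<forall>t\<in>primary_part p G. natmul (p ^ k) t = 0) \<and>
     (\<forall>x\<in>G. \<exists>t\<in>primary_part p G. x - t \<in> multiples (p ^ k) G)"

lemma strongly_coHopfian_primary_split:
  assumes G: "subgrp G" and red: "reduced G" and sG: "strongly_coHopfian G" and p: "prime p"
  shows "\<exists>k. primary_split G p k"
proof -
  obtain N where N: "multiples (p ^ N) G = multiples (p ^ Suc N) G"
    using strongly_coHopfian_multiples_stable[OF G sG] by blast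
  define k where "k = Suc N"
  have stable: "multiples (p ^ (k + j)) G = multiples (p ^ k) G" for j
    using multiples_pow_stable[OF N, of "Suc j"] multiples_pow_stable[OF N, of 1] by (simp add: k_def)
  have "\<forall>t\<in>primary_part p G. natmul (p ^ N) t = 0"
    by (rule reduced_primary_part_bounded[OF G red p primary_part_multiples_stable[OF G N]])
  then have "\<forall>t\<in>primary_part p G. natmul (p ^ k) t = 0" by (simp add: k_def natmul_mult)
  moreover have "\<exists>t\<in>primary_part p G. x - t \<in> multiples (p ^ k) G" if x: "x \<in> G" for x
  proof -
    have "natmul (p ^ k) x \<in> multiples (p ^ (k + k)) G" using stable natmul_in_multiples[OF x] by blast
    then obtain y where y: "y \<in> G" "natmul (p ^ k) x = natmul (p ^ (k + k)) y"
      unfolding multiples_def by auto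
    define t where "t = x - natmul (p ^ k) y"
    have "natmul (p ^ k) t = 0"
      unfolding t_def using y(2) by (simp add: natmul_diff_right natmul_mult[symmetric] power_add)
    then have "t \<in> primary_part p G"
      unfolding primary_part_def t_def using subgrp_diff[OF G x subgrp_natmul[OF G y(1)]] by blast
    moreover have "x - t \<in> multiples (p ^ k) G" unfolding t_def using natmul_in_multiples[OF y(1)] by simp
    ultimately show ?thesis by blast
  qed
  ultimately show ?thesis unfolding primary_split_def k_def by blast
qed

section \<open>Bounded primary parts are summands\<close>

definition sumset :: "'a::ab_group_add set \<Rightarrow> 'a set \<Rightarrow> 'a set" where
  "sumset A B = {a + b | a b. a \<in> A \<and> b \<in> B}"

lemma sumset_add_in: "a \<in> A \<Longrightarrow> b \<in> B \<Longrightarrow> a + b \<in> sumset A B"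
  unfolding sumset_def by blast

lemma subgrp_sumset:
  assumes A: "subgrp A" and B: "subgrp B"
  shows "subgrp (sumset A B)"
proof -
  have "0 + 0 \<in> sumset A B" using subgrp_0[OF A] subgrp_0[OF B] by (rule sumset_add_in)
  moreover have "x + y \<in> sumset A B" if xy: "x \<in> sumset A B" "y \<in> sumset A B" for x y
  proof -
    obtain a b a' b' where "a \<in> A" "b \<in> B" "a' \<in> A" "b' \<in> B" "x = a + b" "y = a' + b'"
      using xy unfolding sumset_def by blast
    moreover have "(a + b) + (a' + b') = (a + a') + (b + b')" by (simp add: algebra_simps)
    ultimately show ?thesis using subgrp_add[OF A] subgrp_add[OF B] sumset_add_in by metis
  qed
  moreover have "- x \<in> sumset A B" if x: "x \<in> sumset A B" for x
  proof -
    obtain a b where "a \<in> A" "b \<in> B" "x = a + b" using x unfolding sumset_def by blast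
    moreover have "- (a + b) = - a + - b" by simp
    ultimately show ?thesis using subgrp_neg[OF A] subgrp_neg[OF B] sumset_add_in by metis
  qed
  ultimately show ?thesis unfolding subgrp_def by simp
qed

lemma sumset_left_subset: "subgrp B \<Longrightarrow> A \<subseteq> sumset A B"
  unfolding sumset_def using subgrp_0 by force

lemma sumset_right_subset: "subgrp A \<Longrightarrow> B \<subseteq> sumset A B"
  unfolding sumset_def using subgrp_0 by force

lemma exists_outside_natmul_in:
  assumes G: "subgrp G" and x: "x \<in> G" "x \<notin> S" and px: "natmul (p ^ i) x \<in> S"
  shows "\<exists>y\<in>G. y \<notin> S \<and> natmul p y \<in> S"
  using x px
proof (induction i arbitrary: x)
  case (Suc i)
  show ?case
  proof (cases "natmul p x \<in> S")
    case False
    have "natmul (p ^ i) (natmul p x) = natmul (p ^ Suc i) x"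
      by (simp add: natmul_mult[symmetric] mult.commute)
    then have "natmul (p ^ i) (natmul p x) \<in> S" using Suc.prems(3) by simp
    then show ?thesis using Suc.IH[OF subgrp_natmul[OF G Suc.prems(1)] False] by blast
  qed (use Suc.prems in blast)
qed simp

lemma exists_max_height_translate:
  assumes S: "subgrp S" and kS: "multiples (p ^ k) G \<subseteq> S" and x: "x \<in> G" "x \<notin> S"
  shows "\<exists>z\<in>S. \<exists>h<k. x + z \<in> multiples (p ^ h) G \<and>
           (\<forall>z'\<in>S. \<forall>j\<le>k. x + z' \<in> multiples (p ^ j) G \<longrightarrow> j \<le> h)"
proof -
  define H where "H = {j. j \<le> k \<and> (\<exists>z\<in>S. x + z \<in> multiples (p ^ j) G)}"
  have "0 \<in> H" unfolding H_def using x(1) subgrp_0[OF S] by force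
  moreover have fin: "finite H" unfolding H_def by simp
  ultimately have "Max H \<in> H" using Max_in by blast
  define h where "h = Max H"
  have "h \<in> H" unfolding h_def by fact
  have max: "\<And>j. j \<in> H \<Longrightarrow> j \<le> h" unfolding h_def using Max_ge[OF fin] .
  from \<open>h \<in> H\<close> obtain z where z: "z \<in> S" "x + z \<in> multiples (p ^ h) G" and "h \<le> k"
    unfolding H_def by blast
  moreover have "h \<noteq> k"
  proof
    assume "h = k"
    then have "(x + z) - z \<in> S" using z kS subgrp_diff[OF S] by blast
    then show False using x(2) by simp
  qed
  moreover have "\<forall>z'\<in>S. \<forall>j\<le>k. x + z' \<in> multiples (p ^ j) G \<longrightarrow> j \<le> h"
    using max unfolding H_def by blast
  ultimately show ?thesis by force
qed

text \<open>
  \<open>G\<^sub>p\<close> stays pure modulo \<open>K\<close>: divisibility of \<open>t \<in> G\<^sub>p\<close> by \<open>p\<^sup>j\<close> in \<open>G/K\<close> is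
  witnessed inside \<open>G\<^sub>p\<close>. A maximal such \<open>K\<close> is a complement of \<open>G\<^sub>p\<close>.
\<close>
definition pure_mod_subgroup :: "nat \<Rightarrow> nat \<Rightarrow> 'a::ab_group_add set \<Rightarrow> 'a set \<Rightarrow> bool" where
  "pure_mod_subgroup p k G K \<longleftrightarrow> subgrp K \<and> K \<subseteq> G \<and> multiples (p ^ k) G \<subseteq> K \<and>
     (\<forall>t\<in>primary_part p G. \<forall>c\<in>K. \<forall>j. t + c \<in> multiples (p ^ j) G \<longrightarrow>
        t \<in> multiples (p ^ j) (primary_part p G))"

lemma pure_mod_subgroup_multiples:
  assumes G: "subgrp G" and bnd: "\<forall>t\<in>primary_part p G. natmul (p ^ k) t = 0"
  shows "pure_mod_subgroup p k G (multiples (p ^ k) G)"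
  unfolding pure_mod_subgroup_def
proof (intro conjI ballI allI impI subgrp_multiples[OF G] multiples_subset[OF G] order_refl)
  fix t c j
  assume t: "t \<in> primary_part p G" and c: "c \<in> multiples (p ^ k) G"
    and tc: "t + c \<in> multiples (p ^ j) G"
  have sub: "subgrp (multiples n G)" for n using subgrp_multiples[OF G] .
  show "t \<in> multiples (p ^ j) (primary_part p G)"
  proof (cases "j \<le> k")
    case True
    then have "c \<in> multiples (p ^ j) G" using c multiples_pow_mono[OF G] by blast
    then have "(t + c) - c \<in> multiples (p ^ j) G" using subgrp_diff[OF sub tc] by blast
    then show ?thesis using primary_part_pure[OF t] by simp
  next
    case False
    then have "t + c \<in> multiples (p ^ k) G" using tc multiples_pow_mono[OF G, of k j] by auto
    then have "(t + c) - c \<in> multiples (p ^ k) G" using subgrp_diff[OF sub _ c] by blast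
    then have "t = 0" using primary_part_Int_multiples[OF bnd t] by simp
    then show ?thesis using subgrp_0[OF subgrp_multiples[OF subgrp_primary_part[OF G]]] by simp
  qed
qed

lemma pure_mod_subgroup_Int:
  assumes G: "subgrp G" and K: "pure_mod_subgroup p k G K" and bnd: "\<forall>t\<in>primary_part p G. natmul (p ^ k) t = 0"
    and t: "t \<in> primary_part p G" "t \<in> K"
  shows "t = 0"
proof -
  have "t + - t \<in> multiples (p ^ k) G" using subgrp_0[OF subgrp_multiples[OF G]] by simp
  moreover have "- t \<in> K" using K t(2) subgrp_neg unfolding pure_mod_subgroup_def by blast
  ultimately have "t \<in> multiples (p ^ k) (primary_part p G)"
    using K t(1) unfolding pure_mod_subgroup_def by blast
  then show ?thesis using bnd unfolding multiples_def by auto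
qed

lemma subgrp_Union_chain:
  assumes "C \<noteq> {}" and sub: "\<And>K. K \<in> C \<Longrightarrow> subgrp K"
    and ch: "\<And>A B. A \<in> C \<Longrightarrow> B \<in> C \<Longrightarrow> A \<subseteq> B \<or> B \<subseteq> A"
  shows "subgrp (\<Union>C)"
  unfolding subgrp_def
proof (intro conjI ballI)
  obtain A where "A \<in> C" using \<open>C \<noteq> {}\<close> by blast
  then show "0 \<in> \<Union>C" using subgrp_0[OF sub] by blast
next
  fix x y assume "x \<in> \<Union>C" "y \<in> \<Union>C"
  then obtain A B where AB: "A \<in> C" "B \<in> C" "x \<in> A" "y \<in> B" by blast
  from ch[OF AB(1,2)] show "x + y \<in> \<Union>C"
  proof
    assume "A \<subseteq> B"
    then show ?thesis using AB subgrp_add[OF sub[OF AB(2)]] by blast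
  next
    assume "B \<subseteq> A"
    then show ?thesis using AB subgrp_add[OF sub[OF AB(1)]] by blast
  qed
next
  fix x assume "x \<in> \<Union>C"
  then obtain A where "A \<in> C" "x \<in> A" by blast
  then show "- x \<in> \<Union>C" using subgrp_neg[OF sub] by blast
qed

lemma pure_mod_subgroup_maximal:
  assumes "pure_mod_subgroup p k G K0"
  obtains M where "pure_mod_subgroup p k G M"
    and "\<And>X. pure_mod_subgroup p k G X \<Longrightarrow> M \<subseteq> X \<Longrightarrow> X = M"
proof -
  define KS where "KS = {K. pure_mod_subgroup p k G K}"
  have chain_ub: "\<exists>U\<in>KS. \<forall>X\<in>C. X \<subseteq> U" if C: "C \<in> chains KS" for C
  proof (cases "C = {}")
    case True
    then show ?thesis using assms unfolding KS_def by blast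
  next
    case False
    have CK: "\<And>K. K \<in> C \<Longrightarrow> pure_mod_subgroup p k G K"
      and ch: "\<And>A B. A \<in> C \<Longrightarrow> B \<in> C \<Longrightarrow> A \<subseteq> B \<or> B \<subseteq> A"
      using C unfolding chains_def chain_subset_def KS_def by auto
    have "subgrp (\<Union>C)"
      using subgrp_Union_chain[OF False _ ch] CK unfolding pure_mod_subgroup_def by blast
    then have "pure_mod_subgroup p k G (\<Union>C)"
      using CK False unfolding pure_mod_subgroup_def by blast
    then show ?thesis unfolding KS_def by blast
  qed
  have "\<exists>M\<in>KS. \<forall>X\<in>KS. M \<subseteq> X \<longrightarrow> X = M"
    by (rule Zorn_Lemma2) (use chain_ub in blast)
  then show ?thesis using that unfolding KS_def by blast
qed

lemma pure_mod_subgroup_shift: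
  assumes K: "pure_mod_subgroup p k G K"
    and x: "x \<in> multiples (p ^ h) G" and px: "natmul p x \<in> sumset (primary_part p G) K"
  obtains s where "s \<in> primary_part p G" "natmul p (x - natmul (p ^ h) s) \<in> K"
proof -
  obtain g where g: "g \<in> G" "x = natmul (p ^ h) g" using x unfolding multiples_def by auto
  obtain t c where tc: "t \<in> primary_part p G" "c \<in> K" "natmul p x = t + c"
    using px unfolding sumset_def by blast
  have "t + c = natmul (p ^ Suc h) g" using tc(3) g(2) by (simp add: natmul_mult)
  then have "t + c \<in> multiples (p ^ Suc h) G" using natmul_in_multiples[OF g(1)] by simp
  then have "t \<in> multiples (p ^ Suc h) (primary_part p G)"
    using K tc(1,2) unfolding pure_mod_subgroup_def by blast
  then obtain s where s: "s \<in> primary_part p G" "t = natmul (p ^ Suc h) s"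
    unfolding multiples_def by auto
  have "natmul p (x - natmul (p ^ h) s) = c"
    using tc(3) s(2) by (simp add: natmul_diff_right natmul_mult)
  then show ?thesis using that s(1) tc(2) by simp
qed

lemma pure_mod_subgroup_adjoin_exists:
  assumes G: "subgrp G" and K: "pure_mod_subgroup p k G K"
    and x: "x \<in> G" "x \<notin> sumset (primary_part p G) K" and px: "natmul p x \<in> sumset (primary_part p G) K"
  obtains y h where "y \<in> G" "y \<notin> sumset (primary_part p G) K" "natmul p y \<in> K"
    "h < k" "y \<in> multiples (p ^ h) G"
    "\<And>z j. z \<in> sumset (primary_part p G) K \<Longrightarrow> j \<le> k \<Longrightarrow> y + z \<in> multiples (p ^ j) G \<Longrightarrow> j \<le> h"
proof -
  define P where "P = primary_part p G"
  define S where "S = sumset P K"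
  have sK: "subgrp K" and kK: "multiples (p ^ k) G \<subseteq> K"
    using K unfolding pure_mod_subgroup_def by auto
  have sP: "subgrp P" unfolding P_def using subgrp_primary_part[OF G] .
  have sS: "subgrp S" unfolding S_def using subgrp_sumset[OF sP sK] .
  have PS: "P \<subseteq> S" and KS: "K \<subseteq> S"
    unfolding S_def using sumset_left_subset[OF sK] sumset_right_subset[OF sP] by auto
  obtain z h where z: "z \<in> S" "x + z \<in> multiples (p ^ h) G" and "h < k"
    and max: "\<And>z' j. z' \<in> S \<Longrightarrow> j \<le> k \<Longrightarrow> x + z' \<in> multiples (p ^ j) G \<Longrightarrow> j \<le> h"
    using exists_max_height_translate[OF sS, of p k G x] kK KS x unfolding S_def P_def by blast
  have "natmul p (x + z) \<in> S"
    using px subgrp_natmul[OF sS z(1)] subgrp_add[OF sS] unfolding S_def P_def natmul_add_right by blast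
  then obtain s where s: "s \<in> P" and py: "natmul p (x + z - natmul (p ^ h) s) \<in> K"
    using pure_mod_subgroup_shift[OF K z(2)] unfolding S_def P_def by blast
  define y where "y = x + z - natmul (p ^ h) s"
  have s_in: "natmul (p ^ h) s \<in> P" using subgrp_natmul[OF sP s] .
  have s_G: "s \<in> G" using s primary_part_subset unfolding P_def by blast
  have "y \<in> G" unfolding y_def using z(2) multiples_subset[OF G] subgrp_diff[OF G _ subgrp_natmul[OF G s_G]] by blast
  moreover have "y \<notin> S"
  proof
    assume "y \<in> S"
    then have "(y + natmul (p ^ h) s) - z \<in> S"
      using subgrp_add[OF sS] subgrp_diff[OF sS] PS s_in z(1) by blast
    then show False using x(2) unfolding y_def S_def P_def by simp
  qed
  moreover have "y \<in> multiples (p ^ h) G"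
    unfolding y_def by (rule subgrp_diff[OF subgrp_multiples[OF G] z(2) natmul_in_multiples[OF s_G]])
  moreover have "j \<le> h" if "z' \<in> S" "j \<le> k" "y + z' \<in> multiples (p ^ j) G" for z' j
  proof (rule max)
    show "z + (z' - natmul (p ^ h) s) \<in> S"
      using subgrp_add[OF sS z(1)] subgrp_diff[OF sS that(1)] PS s_in by blast
    show "x + (z + (z' - natmul (p ^ h) s)) \<in> multiples (p ^ j) G"
      using that(3) by (simp add: y_def algebra_simps)
  qed (use that in simp)
  ultimately show ?thesis using that[of y h] py \<open>h < k\<close> unfolding y_def S_def P_def by blast
qed

lemma subgrp_adjoin:
  assumes K: "subgrp K" and py: "natmul p y \<in> K" and "0 < p"
  shows "subgrp {c + natmul n y | c n. c \<in> K}"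
proof -
  define K' where "K' = {c + natmul n y | c n. c \<in> K}"
  have "0 + natmul 0 y \<in> K'" unfolding K'_def using subgrp_0[OF K] by blast
  moreover have "a + b \<in> K'" if ab: "a \<in> K'" "b \<in> K'" for a b
  proof -
    obtain c1 n1 c2 n2 where "c1 \<in> K" "c2 \<in> K" "a = c1 + natmul n1 y" "b = c2 + natmul n2 y"
      using ab unfolding K'_def by blast
    then have "a + b = (c1 + c2) + natmul (n1 + n2) y" "c1 + c2 \<in> K"
      using subgrp_add[OF K] by (auto simp: natmul_add_left algebra_simps)
    then show ?thesis unfolding K'_def by blast
  qed
  moreover have "- a \<in> K'" if a: "a \<in> K'" for a
  proof -
    obtain c n where c: "c \<in> K" "a = c + natmul n y" using a unfolding K'_def by blast
    have "natmul (n * (p - 1)) y + natmul n y = natmul n (natmul p y)"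
      using \<open>0 < p\<close> by (simp add: natmul_add_left[symmetric] natmul_mult[symmetric] algebra_simps)
    then have "- a = (- c - natmul n (natmul p y)) + natmul (n * (p - 1)) y"
      using c(2) by (simp add: algebra_simps)
    moreover have "- c - natmul n (natmul p y) \<in> K"
      using subgrp_diff[OF K subgrp_neg[OF K c(1)] subgrp_natmul[OF K py]] .
    ultimately show ?thesis unfolding K'_def by blast
  qed
  ultimately show ?thesis unfolding subgrp_def K'_def[symmetric] by simp
qed

lemma coprime_natmul_translate:
  assumes G: "subgrp G" and P: "subgrp P" and K: "subgrp K" and "coprime r p" and "0 < r"
    and t: "t \<in> P" and c: "c \<in> K" and py: "natmul p y \<in> K"
    and tcr: "t + c + natmul r y \<in> multiples n G"
  shows "\<exists>z\<in>sumset P K. y + z \<in> multiples n G"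
proof -
  obtain u v where uv: "r * u = p * v + 1"
    using bezout_nat[of r p] \<open>coprime r p\<close> \<open>0 < r\<close> by auto
  define z where "z = natmul u t + (natmul u c + natmul v (natmul p y))"
  have "z \<in> sumset P K"
    unfolding z_def using subgrp_natmul[OF P t] subgrp_natmul[OF K c] subgrp_natmul[OF K py]
      subgrp_add[OF K] by (blast intro: sumset_add_in)
  moreover have "natmul u (t + c + natmul r y) = y + z"
    by (simp add: z_def natmul_add_right natmul_mult[symmetric] uv natmul_Suc algebra_simps)
  ultimately show ?thesis using multiples_natmul_closed[OF G tcr] by metis
qed

text \<open>
  It is the maximality of the height \<open>h\<close> of \<open>y\<close> over the coset \<open>y + (G\<^sub>p + K)\<close> that keeps
  \<open>G\<^sub>p\<close> pure modulo the enlarged subgroup.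
\<close>
lemma pure_mod_subgroup_adjoin:
  assumes G: "subgrp G" and p: "prime p" and K: "pure_mod_subgroup p k G K"
    and y: "y \<in> G" "natmul p y \<in> K" and "h < k" and y_h: "y \<in> multiples (p ^ h) G"
    and max: "\<And>z j. z \<in> sumset (primary_part p G) K \<Longrightarrow> j \<le> k \<Longrightarrow> y + z \<in> multiples (p ^ j) G \<Longrightarrow> j \<le> h"
  shows "pure_mod_subgroup p k G {c + natmul n y | c n. c \<in> K}"
proof -
  define P where "P = primary_part p G"
  define K' where "K' = {c + natmul n y | c n. c \<in> K}"
  have sK: "subgrp K" and KG: "K \<subseteq> G" and kK: "multiples (p ^ k) G \<subseteq> K"
    and pure: "\<And>t c j. t \<in> P \<Longrightarrow> c \<in> K \<Longrightarrow> t + c \<in> multiples (p ^ j) G \<Longrightarrow> t \<in> multiples (p ^ j) P"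
    using K unfolding pure_mod_subgroup_def P_def by auto
  have sP: "subgrp P" unfolding P_def using subgrp_primary_part[OF G] .
  have "K \<subseteq> K'" unfolding K'_def by (force intro: exI[of _ 0])
  moreover have "t \<in> multiples (p ^ j) P"
    if t: "t \<in> P" and e: "e \<in> K'" and te: "t + e \<in> multiples (p ^ j) G" for t e j
  proof -
    obtain c0 n where c0: "c0 \<in> K" "e = c0 + natmul n y" using e unfolding K'_def by blast
    define r where "r = n mod p"
    define c where "c = c0 + natmul (n div p) (natmul p y)"
    have c: "c \<in> K" unfolding c_def using subgrp_add[OF sK c0(1) subgrp_natmul[OF sK y(2)]] .
    have "natmul n y = natmul (n div p) (natmul p y) + natmul r y"
      unfolding r_def by (metis natmul_add_left natmul_mult div_mult_mod_eq)
    then have tcr: "t + c + natmul r y \<in> multiples (p ^ j) G"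
      using te c0(2) by (simp add: c_def algebra_simps)
    have "t + c \<in> multiples (p ^ j) G"
    proof (cases "r = 0")
      case False
      have "r < p" using prime_gt_0_nat[OF p] unfolding r_def by simp
      then have "\<not> p dvd r" using False by (auto dest: dvd_imp_le)
      then have "coprime r p" using prime_imp_coprime[OF p] coprime_commute by blast
      have "\<not> h < j"
      proof
        assume "h < j"
        then have "t + c + natmul r y \<in> multiples (p ^ Suc h) G"
          using tcr multiples_pow_mono[OF G, of "Suc h" j] by auto
        then obtain z where "z \<in> sumset P K" "y + z \<in> multiples (p ^ Suc h) G"
          using coprime_natmul_translate[OF G sP sK \<open>coprime r p\<close> _ t c y(2)] False by blast
        then show False using max[of z "Suc h"] \<open>h < k\<close> unfolding P_def by simp
      qed
      then have "y \<in> multiples (p ^ j) G" using y_h multiples_pow_mono[OF G, of j h] by auto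
      then have "natmul r y \<in> multiples (p ^ j) G" by (rule multiples_natmul_closed[OF G])
      then have "(t + c + natmul r y) - natmul r y \<in> multiples (p ^ j) G"
        using subgrp_diff[OF subgrp_multiples[OF G] tcr] by blast
      then show ?thesis by simp
    qed (use tcr in simp)
    then show ?thesis using pure t c by blast
  qed
  moreover have "K' \<subseteq> G" unfolding K'_def using KG subgrp_add[OF G] subgrp_natmul[OF G y(1)] by blast
  moreover have "subgrp K'" unfolding K'_def using subgrp_adjoin[OF sK y(2) prime_gt_0_nat[OF p]] .
  ultimately show ?thesis using kK unfolding pure_mod_subgroup_def K'_def[symmetric] P_def by blast
qed

lemma bounded_primary_part_complement:
  assumes G: "subgrp G" and p: "prime p" and bnd: "\<forall>t\<in>primary_part p G. natmul (p ^ k) t = 0"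
  obtains K where "subgrp K" "K \<subseteq> G" "\<And>t. t \<in> primary_part p G \<Longrightarrow> t \<in> K \<Longrightarrow> t = 0"
    "\<And>x. x \<in> G \<Longrightarrow> \<exists>t\<in>primary_part p G. \<exists>c\<in>K. x = t + c"
proof -
  define P where "P = primary_part p G"
  obtain M where M: "pure_mod_subgroup p k G M"
    and M_max: "\<And>X. pure_mod_subgroup p k G X \<Longrightarrow> M \<subseteq> X \<Longrightarrow> X = M"
    using pure_mod_subgroup_maximal[OF pure_mod_subgroup_multiples[OF G bnd]] by blast
  have sM: "subgrp M" and MG: "M \<subseteq> G" and kM: "multiples (p ^ k) G \<subseteq> M"
    using M unfolding pure_mod_subgroup_def by auto
  have MS: "M \<subseteq> sumset P M"
    using sumset_right_subset[OF subgrp_primary_part[OF G]] unfolding P_def .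
  have "G \<subseteq> sumset P M"
  proof
    fix x0 assume x0: "x0 \<in> G"
    show "x0 \<in> sumset P M"
    proof (rule ccontr)
      assume "x0 \<notin> sumset P M"
      moreover have "natmul (p ^ k) x0 \<in> sumset P M" using natmul_in_multiples[OF x0] kM MS by blast
      ultimately obtain x where "x \<in> G" "x \<notin> sumset P M" "natmul p x \<in> sumset P M"
        using exists_outside_natmul_in[OF G x0] by blast
      then obtain y h where y: "y \<in> G" "y \<notin> sumset P M" "natmul p y \<in> M" "h < k"
        "y \<in> multiples (p ^ h) G"
        "\<And>z j. z \<in> sumset P M \<Longrightarrow> j \<le> k \<Longrightarrow> y + z \<in> multiples (p ^ j) G \<Longrightarrow> j \<le> h"
        using pure_mod_subgroup_adjoin_exists[OF G M] unfolding P_def by blast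
      define M' where "M' = {c + natmul n y | c n. c \<in> M}"
      have "pure_mod_subgroup p k G M'"
        unfolding M'_def using pure_mod_subgroup_adjoin[OF G p M y(1,3,4,5)] y(6) unfolding P_def by blast
      moreover have "M \<subseteq> M'" unfolding M'_def by (force intro: exI[of _ 0])
      ultimately have "M' = M" using M_max by blast
      moreover have "y \<in> M'"
        unfolding M'_def using subgrp_0[OF sM] by (intro CollectI exI[of _ 0] exI[of _ 1]) simp
      ultimately show False using y(2) MS by blast
    qed
  qed
  then have "\<And>x. x \<in> G \<Longrightarrow> \<exists>t\<in>P. \<exists>c\<in>M. x = t + c" unfolding sumset_def by blast
  then show ?thesis
    using that[OF sM MG] pure_mod_subgroup_Int[OF G M bnd] unfolding P_def by blast
qed

definition coprime_divisible_part :: "nat \<Rightarrow> 'a::ab_group_add set \<Rightarrow> 'a set" where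
  "coprime_divisible_part p G = {u \<in> G. \<forall>d. coprime d p \<longrightarrow> u \<in> multiples d G}"

definition power_divisible_part :: "nat \<Rightarrow> 'a::ab_group_add set \<Rightarrow> 'a set" where
  "power_divisible_part p G = {w \<in> G. \<forall>n. w \<in> multiples (p ^ n) G}"

lemma subgrp_coprime_divisible_part:
  assumes G: "subgrp G"
  shows "subgrp (coprime_divisible_part p G)"
  using subgrp_0[OF G] subgrp_add[OF G] subgrp_neg[OF G] subgrp_0[OF subgrp_multiples[OF G]]
    subgrp_add[OF subgrp_multiples[OF G]] subgrp_neg[OF subgrp_multiples[OF G]]
  unfolding subgrp_def coprime_divisible_part_def by auto

lemma subgrp_power_divisible_part:
  assumes G: "subgrp G"
  shows "subgrp (power_divisible_part p G)"
  using subgrp_0[OF G] subgrp_add[OF G] subgrp_neg[OF G] subgrp_0[OF subgrp_multiples[OF G]]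
    subgrp_add[OF subgrp_multiples[OF G]] subgrp_neg[OF subgrp_multiples[OF G]]
  unfolding subgrp_def power_divisible_part_def by auto

lemma primary_part_subset_coprime_divisible_part:
  "subgrp G \<Longrightarrow> primary_part p G \<subseteq> coprime_divisible_part p G"
  unfolding coprime_divisible_part_def
  using primary_part_in_multiples_coprime primary_part_subset by blast

lemma coprime_divisible_Int_power_divisible:
  assumes G: "subgrp G" and red: "reduced G" and p: "prime p"
    and bnd: "\<And>q. prime q \<Longrightarrow> \<exists>k. \<forall>t\<in>primary_part q G. natmul (q ^ k) t = 0"
    and u: "u \<in> coprime_divisible_part p G" "u \<in> power_divisible_part p G"
  shows "u = 0"
proof (rule reduced_prime_power_divisible_eq_0[OF G red bnd])
  show "u \<in> G" using u(1) unfolding coprime_divisible_part_def by blast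
  show "u \<in> multiples (q ^ j) G" if q: "prime q" for q j
  proof (cases "q = p")
    case True
    then show ?thesis using u(2) unfolding power_divisible_part_def by blast
  next
    case False
    then have "coprime (q ^ j) p" using primes_coprime[OF q p] by simp
    then show ?thesis using u(1) unfolding coprime_divisible_part_def by blast
  qed
qed

lemma torsion_free_coprime_divisible_Int:
  assumes G: "subgrp G" and p: "prime p"
    and Int_0: "\<And>u. u \<in> coprime_divisible_part p G \<Longrightarrow> u \<in> power_divisible_part p G \<Longrightarrow> u = 0"
    and K: "subgrp K" "\<And>t. t \<in> primary_part p G \<Longrightarrow> t \<in> K \<Longrightarrow> t = 0"
  shows "torsion_free (coprime_divisible_part p G \<inter> K)"
  unfolding torsion_free_def
proof (intro ballI allI impI)
  fix z and n :: nat
  assume z: "z \<in> coprime_divisible_part p G \<inter> K" and "0 < n" and nz: "natmul n z = 0"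
  obtain n' where n': "n = p ^ multiplicity p n * n'" "\<not> p dvd n'"
    using multiplicity_decompose'[of n p] \<open>0 < n\<close> p not_prime_unit by blast
  define y where "y = natmul (p ^ multiplicity p n) z"
  have y_cd: "y \<in> coprime_divisible_part p G"
    unfolding y_def using z subgrp_natmul[OF subgrp_coprime_divisible_part[OF G]] by blast
  then have y_in: "y \<in> G" unfolding coprime_divisible_part_def by blast
  have ny: "natmul n' y = 0" using nz n'(1) by (simp add: y_def natmul_mult[symmetric] mult.commute)
  have "y \<in> multiples (p ^ j) G" for j
  proof -
    have "coprime (p ^ j) n'" using prime_imp_coprime[OF p n'(2)] by simp
    then obtain u where "natmul (p ^ j) (natmul u y) = y" using natmul_eq_0_coprime_inverse[OF ny] by blast
    then show ?thesis using natmul_in_multiples[OF subgrp_natmul[OF G y_in]] by metis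
  qed
  then have "y \<in> power_divisible_part p G" unfolding power_divisible_part_def using y_in by blast
  then have "y = 0" using Int_0 y_cd by blast
  then have "z \<in> primary_part p G"
    using z unfolding y_def primary_part_def coprime_divisible_part_def by blast
  then show "z = 0" using K(2) z by blast
qed

lemma cotorsion_complement_decomposition:
  fixes G :: "'a::ab_group_add set"
  assumes G: "subgrp G" and ext: "Ext_Q_vanishes G" and p: "prime p"
    and K: "\<And>x. x \<in> G \<Longrightarrow> \<exists>t\<in>primary_part p G. \<exists>c\<in>K. x = t + c" and y: "y \<in> G"
  shows "\<exists>c\<in>coprime_divisible_part p G \<inter> K.
           \<exists>b\<in>sumset (primary_part p G) (power_divisible_part p G). y = c + b"
proof -
  obtain w where w: "w \<in> power_divisible_part p G" "y - w \<in> coprime_divisible_part p G"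
    using cotorsion_prime_decomposition[OF G ext p y] subgrp_diff[OF G y]
    unfolding power_divisible_part_def coprime_divisible_part_def by blast
  obtain t c where tc: "t \<in> primary_part p G" "c \<in> K" "y - w = t + c"
    using K subgrp_diff[OF G y] w(1) unfolding power_divisible_part_def by blast
  have "c = (y - w) - t" using tc(3) by simp
  then have "c \<in> coprime_divisible_part p G"
    using subgrp_diff[OF subgrp_coprime_divisible_part[OF G] w(2)] tc(1)
      primary_part_subset_coprime_divisible_part[OF G] by blast
  moreover have "y = c + (t + w)" using tc(3) by (simp add: algebra_simps)
  ultimately show ?thesis using tc sumset_add_in[OF tc(1) w(1)] by blast
qed

lemma direct_summand_coprime_divisible_Int:
  assumes G: "subgrp G"
    and Int_0: "\<And>u. u \<in> coprime_divisible_part p G \<Longrightarrow> u \<in> power_divisible_part p G \<Longrightarrow> u = 0"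
    and K: "subgrp K" "K \<subseteq> G" "\<And>t. t \<in> primary_part p G \<Longrightarrow> t \<in> K \<Longrightarrow> t = 0"
    and decomp: "\<And>y. y \<in> G \<Longrightarrow> \<exists>c\<in>coprime_divisible_part p G \<inter> K.
                    \<exists>b\<in>sumset (primary_part p G) (power_divisible_part p G). y = c + b"
  shows "direct_summand (coprime_divisible_part p G \<inter> K) G"
proof -
  define P where "P = primary_part p G"
  define D where "D = coprime_divisible_part p G"
  define W where "W = power_divisible_part p G"
  have sD: "subgrp D" and sW: "subgrp W" and sP: "subgrp P"
    unfolding D_def W_def P_def
    by (simp_all add: subgrp_coprime_divisible_part[OF G] subgrp_power_divisible_part[OF G] subgrp_primary_part[OF G])
  have PD: "P \<subseteq> D" unfolding P_def D_def using primary_part_subset_coprime_divisible_part[OF G] .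
  have PW_G: "sumset P W \<subseteq> G"
    unfolding sumset_def P_def W_def power_divisible_part_def
    using primary_part_subset subgrp_add[OF G] by blast
  have "D \<inter> K \<inter> sumset P W = {0}"
  proof (intro equalityI subsetI)
    fix c assume "c \<in> D \<inter> K \<inter> sumset P W"
    then obtain t w where c: "c \<in> D" "c \<in> K" "t \<in> P" "w \<in> W" "c = t + w"
      unfolding sumset_def by blast
    then have "c - t \<in> D" using subgrp_diff[OF sD] PD by blast
    then have "c - t = 0" using Int_0 c unfolding D_def W_def by simp
    then show "c \<in> {0}" using K(3) c unfolding P_def by simp
  qed (use subgrp_0[OF sD] subgrp_0[OF K(1)] subgrp_0[OF subgrp_sumset[OF sP sW]] in blast)
  moreover have "{a + b | a b. a \<in> D \<inter> K \<and> b \<in> sumset P W} = G"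
  proof (intro equalityI subsetI)
    fix x assume "x \<in> {a + b | a b. a \<in> D \<inter> K \<and> b \<in> sumset P W}"
    then obtain a b where "a \<in> K" "b \<in> sumset P W" "x = a + b" by blast
    then show "x \<in> G" using K(2) PW_G subgrp_add[OF G] by blast
  next
    fix x assume "x \<in> G"
    then obtain c b where "c \<in> D \<inter> K" "b \<in> sumset P W" "x = c + b"
      using decomp unfolding D_def P_def W_def by blast
    then show "x \<in> {a + b | a b. a \<in> D \<inter> K \<and> b \<in> sumset P W}" by blast
  qed
  ultimately show ?thesis
    unfolding direct_summand_def D_def[symmetric]
    using subgrp_Int[OF sD K(1)] K(2) subgrp_sumset[OF sP sW] PW_G by blast
qed

lemma adjusted_primary_split:
  fixes G :: "'a::ab_group_add set"
  assumes G: "subgrp G" and red: "reduced G" and ext: "Ext_Q_vanishes G" and adj: "adjusted G"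
    and bnd: "\<And>q. prime q \<Longrightarrow> \<exists>k. \<forall>t\<in>primary_part q G. natmul (q ^ k) t = 0"
    and p: "prime p"
  shows "\<exists>k. primary_split G p k"
proof -
  define P where "P = primary_part p G"
  define D where "D = coprime_divisible_part p G"
  define W where "W = power_divisible_part p G"
  obtain k where k: "\<forall>t\<in>P. natmul (p ^ k) t = 0" using bnd[OF p] unfolding P_def by blast
  obtain K where K: "subgrp K" "K \<subseteq> G" "\<And>t. t \<in> P \<Longrightarrow> t \<in> K \<Longrightarrow> t = 0"
    "\<And>x. x \<in> G \<Longrightarrow> \<exists>t\<in>P. \<exists>c\<in>K. x = t + c"
    using bounded_primary_part_complement[OF G p k[unfolded P_def]] unfolding P_def by blast
  have Int_0: "\<And>u. u \<in> D \<Longrightarrow> u \<in> W \<Longrightarrow> u = 0"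
    unfolding D_def W_def using coprime_divisible_Int_power_divisible[OF G red p bnd] by blast
  have decomp: "\<exists>c\<in>D \<inter> K. \<exists>b\<in>sumset P W. y = c + b" if "y \<in> G" for y
    using cotorsion_complement_decomposition[OF G ext p K(4)[unfolded P_def] that]
    unfolding D_def P_def W_def .
  have "direct_summand (D \<inter> K) G"
    using direct_summand_coprime_divisible_Int[OF G Int_0[unfolded D_def W_def] K(1,2)
        K(3)[unfolded P_def] decomp[unfolded D_def P_def W_def]]
    unfolding D_def .
  moreover have "torsion_free (D \<inter> K)"
    using torsion_free_coprime_divisible_Int[OF G p _ K(1)] Int_0 K(3)
    unfolding D_def W_def P_def by blast
  ultimately have DK_0: "D \<inter> K = {0}" using adj unfolding adjusted_def by blast
  have "\<exists>t\<in>P. x - t \<in> multiples (p ^ Suc k) G" if x: "x \<in> G" for x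
  proof -
    obtain c b where "c \<in> D \<inter> K" "b \<in> sumset P W" "x = c + b" using decomp[OF x] by blast
    then obtain t w where "t \<in> P" "w \<in> W" "x = t + w" using DK_0 unfolding sumset_def by auto
    moreover have "w \<in> multiples (p ^ Suc k) G"
      using \<open>w \<in> W\<close> unfolding W_def power_divisible_part_def by blast
    ultimately show ?thesis by force
  qed
  moreover have "\<forall>t\<in>P. natmul (p ^ Suc k) t = 0" using k by (simp add: natmul_mult)
  ultimately show ?thesis unfolding primary_split_def P_def by blast
qed

section \<open>Groups split at every prime\<close>

locale split_reduced_cotorsion =
  fixes G :: "'a::ab_group_add set"
  assumes subgrp: "subgrp G" and reduced: "reduced G" and Ext: "Ext_Q_vanishes G"
    and split: "prime p \<Longrightarrow> \<exists>k. primary_split G p k"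
begin

definition split_exp :: "nat \<Rightarrow> nat" where
  "split_exp p = (SOME k. primary_split G p k)"

lemma primary_split_exp:
  assumes "prime p"
  shows "0 < split_exp p" and "t \<in> primary_part p G \<Longrightarrow> natmul (p ^ split_exp p) t = 0"
    and "x \<in> G \<Longrightarrow> \<exists>t\<in>primary_part p G. x - t \<in> multiples (p ^ split_exp p) G"
  using someI_ex[OF split[OF assms]] unfolding split_exp_def primary_split_def by blast+

definition proj :: "nat \<Rightarrow> 'a \<Rightarrow> 'a" where
  "proj p x = (THE t. t \<in> primary_part p G \<and> x - t \<in> multiples (p ^ split_exp p) G)"

lemma proj_eqI:
  assumes p: "prime p" and t: "t \<in> primary_part p G" "x - t \<in> multiples (p ^ split_exp p) G"
  shows "proj p x = t"
  unfolding proj_def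
proof (rule the1_equality[OF ex1I[of _ t]])
  fix t' assume t': "t' \<in> primary_part p G \<and> x - t' \<in> multiples (p ^ split_exp p) G"
  have "t' - t = (x - t) - (x - t')" by simp
  then have "t' - t \<in> multiples (p ^ split_exp p) G"
    using t t' subgrp_diff[OF subgrp_multiples[OF subgrp]] by metis
  moreover have "t' - t \<in> primary_part p G"
    using t t' subgrp_diff[OF subgrp_primary_part[OF subgrp]] by blast
  ultimately have "t' - t = 0"
    using primary_part_Int_multiples primary_split_exp(2)[OF p] by blast
  then show "t' = t" by simp
qed (use t in auto)

lemma proj_in_primary_part:
  assumes p: "prime p" and x: "x \<in> G"
  shows "proj p x \<in> primary_part p G" and "x - proj p x \<in> multiples (p ^ split_exp p) G"
  using primary_split_exp(3)[OF p x] proj_eqI[OF p] by auto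

lemma proj_in: "prime p \<Longrightarrow> x \<in> G \<Longrightarrow> proj p x \<in> G"
  using proj_in_primary_part(1) primary_part_subset by blast

lemma proj_in_torsion_part: "prime p \<Longrightarrow> x \<in> G \<Longrightarrow> proj p x \<in> torsion_part G"
  using proj_in_primary_part(1) primary_part_subset_torsion_part by blast

lemma proj_primary_part: "prime p \<Longrightarrow> t \<in> primary_part p G \<Longrightarrow> proj p t = t"
  by (rule proj_eqI) (auto simp: subgrp_0[OF subgrp_multiples[OF subgrp]])

lemma proj_multiples: "prime p \<Longrightarrow> y \<in> multiples (p ^ split_exp p) G \<Longrightarrow> proj p y = 0"
  by (rule proj_eqI) (auto simp: subgrp_0[OF subgrp_primary_part[OF subgrp]])

lemma proj_primary_part_other:
  assumes p: "prime p" and q: "prime q" and "p \<noteq> q" and t: "t \<in> primary_part q G"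
  shows "proj p t = 0"
proof -
  have "coprime (p ^ split_exp p) q" using primes_coprime[OF p q \<open>p \<noteq> q\<close>] by simp
  then show ?thesis
    using primary_part_in_multiples_coprime[OF subgrp t] proj_multiples[OF p] by blast
qed

lemma proj_proj: "prime p \<Longrightarrow> prime q \<Longrightarrow> x \<in> G \<Longrightarrow> proj p (proj q x) = (if p = q then proj q x else 0)"
  using proj_primary_part proj_primary_part_other proj_in_primary_part(1) by auto

lemma proj_endo:
  assumes p: "prime p" and f: "endo_on G f" and x: "x \<in> G"
  shows "proj p (f x) = f (proj p x)"
proof (rule proj_eqI[OF p])
  show "f (proj p x) \<in> primary_part p G"
    using primary_part_endo_on[OF subgrp f proj_in_primary_part(1)[OF p x]] .
  obtain g where g: "g \<in> G" "x - proj p x = natmul (p ^ split_exp p) g"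
    using proj_in_primary_part(2)[OF p x] unfolding multiples_def by auto
  then have "f x - f (proj p x) = natmul (p ^ split_exp p) (f g)"
    using endo_on_diff[OF subgrp f x proj_in[OF p x]] endo_on_natmul[OF subgrp f] by simp
  then show "f x - f (proj p x) \<in> multiples (p ^ split_exp p) G"
    using natmul_in_multiples endo_on_in[OF f g(1)] by metis
qed

lemma proj_add:
  assumes p: "prime p" and x: "x \<in> G" and y: "y \<in> G"
  shows "proj p (x + y) = proj p x + proj p y"
proof (rule proj_eqI[OF p])
  show "proj p x + proj p y \<in> primary_part p G"
    using proj_in_primary_part(1)[OF p] x y subgrp_add[OF subgrp_primary_part[OF subgrp]] by blast
  have "x + y - (proj p x + proj p y) = (x - proj p x) + (y - proj p y)" by simp
  then show "x + y - (proj p x + proj p y) \<in> multiples (p ^ split_exp p) G"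
    using proj_in_primary_part(2)[OF p] x y subgrp_add[OF subgrp_multiples[OF subgrp]] by metis
qed

lemma endo_on_proj: "prime p \<Longrightarrow> endo_on G (proj p)"
  unfolding endo_on_def using proj_in proj_add by blast

lemma proj_diff: "prime p \<Longrightarrow> x \<in> G \<Longrightarrow> y \<in> G \<Longrightarrow> proj p (x - y) = proj p x - proj p y"
  using endo_on_diff[OF subgrp endo_on_proj] by blast

lemma proj_sum: "prime p \<Longrightarrow> (\<And>i. i \<in> A \<Longrightarrow> g i \<in> G) \<Longrightarrow> proj p (sum g A) = (\<Sum>i\<in>A. proj p (g i))"
  using endo_on_sum[OF subgrp endo_on_proj] by blast

lemma multiples_split_exp_subset:
  assumes p: "prime p"
  shows "multiples (p ^ split_exp p) G \<subseteq> multiples (p ^ j) G"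
proof -
  define k where "k = split_exp p"
  have "multiples (p ^ k) G \<subseteq> multiples (p ^ (k + k)) G"
  proof
    fix x assume "x \<in> multiples (p ^ k) G"
    then obtain g where g: "g \<in> G" "x = natmul (p ^ k) g" unfolding multiples_def by auto
    obtain g' where g': "g' \<in> G" "g - proj p g = natmul (p ^ k) g'"
      using proj_in_primary_part(2)[OF p g(1)] unfolding k_def multiples_def by auto
    have "natmul (p ^ k) (proj p g) = 0"
      using primary_split_exp(2)[OF p proj_in_primary_part(1)[OF p g(1)]] unfolding k_def .
    then have "x = natmul (p ^ (k + k)) g'"
      using g(2) g'(2)[symmetric] by (simp add: natmul_diff_right power_add natmul_mult)
    then show "x \<in> multiples (p ^ (k + k)) G" using natmul_in_multiples[OF g'(1)] by simp
  qed
  also have "\<dots> \<subseteq> multiples (p ^ Suc k) G"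
    using primary_split_exp(1)[OF p] by (intro multiples_pow_mono[OF subgrp]) (simp add: k_def)
  finally have "multiples (p ^ k) G = multiples (p ^ Suc k) G"
    using multiples_pow_mono[OF subgrp, of k "Suc k"] by auto
  then have "multiples (p ^ k) G = multiples (p ^ (k + j)) G" by (simp add: multiples_pow_stable)
  also have "\<dots> \<subseteq> multiples (p ^ j) G" by (rule multiples_pow_mono[OF subgrp]) simp
  finally show ?thesis unfolding k_def .
qed

lemma proj_eq_0_imp_eq_0:
  assumes x: "x \<in> G" and proj_0: "\<And>p. prime p \<Longrightarrow> proj p x = 0"
  shows "x = 0"
proof (rule reduced_prime_power_divisible_eq_0[OF subgrp reduced _ x])
  show "\<exists>k. \<forall>t\<in>primary_part q G. natmul (q ^ k) t = 0" if "prime q" for q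
    using primary_split_exp(2)[OF that] by blast
  show "x \<in> multiples (q ^ j) G" if q: "prime q" for q j
    using proj_in_primary_part(2)[OF q x] proj_0[OF q] multiples_split_exp_subset[OF q] by auto
qed

lemma proj_inject:
  "x \<in> G \<Longrightarrow> y \<in> G \<Longrightarrow> (\<And>p. prime p \<Longrightarrow> proj p x = proj p y) \<Longrightarrow> x = y"
  using proj_eq_0_imp_eq_0[of "x - y"] proj_diff subgrp_diff[OF subgrp] by force

lemma proj_surj:
  assumes t: "\<And>p. prime p \<Longrightarrow> t p \<in> primary_part p G"
  shows "\<exists>g\<in>G. \<forall>p. prime p \<longrightarrow> proj p g = t p"
proof -
  obtain g where g: "g \<in> G"
    and lim: "\<And>n. g - (\<Sum>q | prime q \<and> q \<le> n. t q) \<in> multiples (fact n) G"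
    using cotorsion_sum_primary_family[OF subgrp Ext t] by blast
  have "proj p g = t p" if p: "prime p" for p
  proof -
    define n where "n = p ^ split_exp p + p"
    define Q where "Q = {q. prime q \<and> q \<le> n}"
    have fin: "finite Q" unfolding Q_def by (rule finite_subset[of _ "{..n}"]) auto
    have t_in: "q \<in> Q \<Longrightarrow> t q \<in> G" for q using t primary_part_subset unfolding Q_def by blast
    have "p ^ split_exp p dvd fact n"
      using p by (intro dvd_fact) (simp_all add: n_def prime_gt_0_nat Suc_le_eq)
    then have "g - sum t Q \<in> multiples (p ^ split_exp p) G"
      using lim[of n] multiples_dvd_subset[OF subgrp] unfolding Q_def by blast
    moreover have "sum t Q \<in> G" using subgrp_sum[OF subgrp] t_in by blast
    ultimately have "proj p g = proj p (sum t Q)"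
      using proj_multiples[OF p] proj_diff[OF p g] by fastforce
    also have "\<dots> = (\<Sum>q\<in>Q. proj p (t q))" using proj_sum[OF p, of Q t] t_in by blast
    also have "\<dots> = (\<Sum>q\<in>Q. if p = q then t q else 0)"
      using proj_primary_part[OF p] proj_primary_part_other[OF p] t
      by (intro sum.cong) (auto simp: Q_def)
    also have "\<dots> = t p" using p fin by (simp add: Q_def n_def)
    finally show ?thesis .
  qed
  then show ?thesis using g by blast
qed

lemma torsion_eq_sum_proj:
  assumes x: "x \<in> torsion_part G"
  shows "\<exists>P. finite P \<and> (\<forall>p\<in>P. prime p) \<and> (\<forall>p. prime p \<longrightarrow> p \<notin> P \<longrightarrow> proj p x = 0) \<and>
             x = (\<Sum>p\<in>P. proj p x)"
proof -
  obtain n where n: "n > 0" "natmul n x = 0" and x_in: "x \<in> G"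
    using x unfolding torsion_part_def by auto
  define P where "P = {q. prime q \<and> q dvd n}"
  have fin: "finite P" unfolding P_def using n(1) by (auto intro: finite_subset[of _ "{..n}"] dvd_imp_le)
  have proj_0: "proj p x = 0" if p: "prime p" "p \<notin> P" for p
  proof -
    obtain j where j: "natmul (p ^ j) (proj p x) = 0"
      using proj_in_primary_part(1)[OF p(1) x_in] unfolding primary_part_def by auto
    have "natmul n (proj p x) = 0"
      using proj_endo[OF p(1) endo_on_natmul_map[OF subgrp, of n] x_in] n(2)
        proj_multiples[OF p(1) subgrp_0[OF subgrp_multiples[OF subgrp]]] by simp
    moreover have "coprime n (p ^ j)"
      using p prime_imp_coprime[OF p(1)] unfolding P_def by (simp add: coprime_commute)
    ultimately show ?thesis
      using natmul_eq_0_coprime_inverse[OF j] by (metis natmul_commute natmul_zero_right)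
  qed
  have P_in: "q \<in> P \<Longrightarrow> proj q x \<in> G" for q using proj_in x_in unfolding P_def by auto
  have "x = (\<Sum>q\<in>P. proj q x)"
  proof (rule proj_inject[OF x_in subgrp_sum[OF subgrp P_in]])
    fix p :: nat assume p: "prime p"
    have "proj p (\<Sum>q\<in>P. proj q x) = (\<Sum>q\<in>P. if p = q then proj q x else 0)"
      using proj_sum[OF p, of P "\<lambda>q. proj q x"] P_in proj_proj[OF p _ x_in]
      unfolding P_def by (auto intro!: sum.cong)
    also have "\<dots> = proj p x" by (cases "p \<in> P") (simp_all add: fin proj_0[OF p])
    finally show "proj p x = proj p (\<Sum>q\<in>P. proj q x)" by simp
  qed
  then show ?thesis using fin proj_0 unfolding P_def by blast
qed

lemma torsion_endo_primary_part:
  assumes f: "endo_on (torsion_part G) f" and p: "prime p" and t: "t \<in> primary_part p G"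
  shows "f t \<in> primary_part p G"
  using primary_part_endo_on[OF subgrp_torsion_part[OF subgrp] f, of t p] t
  unfolding primary_part_torsion_part[OF p] by blast

lemma proj_torsion_endo:
  assumes f: "endo_on (torsion_part G) f" and p: "prime p" and t: "t \<in> torsion_part G"
  shows "proj p (f t) = f (proj p t)"
proof -
  obtain P where P: "finite P" "\<forall>q\<in>P. prime q" "\<And>q. prime q \<Longrightarrow> q \<notin> P \<Longrightarrow> proj q t = 0"
    "t = (\<Sum>q\<in>P. proj q t)"
    using torsion_eq_sum_proj[OF t] by blast
  have t_in: "t \<in> G" using t torsion_part_subset by blast
  have f_proj: "q \<in> P \<Longrightarrow> f (proj q t) \<in> primary_part q G" for q
    using torsion_endo_primary_part[OF f] proj_in_primary_part(1)[OF _ t_in] P(2) by blast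
  have "f (\<Sum>q\<in>P. proj q t) = (\<Sum>q\<in>P. f (proj q t))"
    using P(2) proj_in_torsion_part[OF _ t_in]
    by (intro endo_on_sum[OF subgrp_torsion_part[OF subgrp] f]) blast
  then have "f t = (\<Sum>q\<in>P. f (proj q t))" using P(4) by metis
  moreover have "f (proj q t) \<in> G" if "q \<in> P" for q
    using f_proj[OF that] primary_part_subset by blast
  ultimately have "proj p (f t) = (\<Sum>q\<in>P. proj p (f (proj q t)))"
    using proj_sum[OF p, of P "\<lambda>q. f (proj q t)"] by simp
  also have "\<dots> = (\<Sum>q\<in>P. if p = q then f (proj q t) else 0)"
    using f_proj P(2) proj_primary_part[OF p] proj_primary_part_other[OF p]
    by (intro sum.cong) auto
  also have "\<dots> = f (proj p t)"
    using P(1) P(3)[OF p] endo_on_0[OF subgrp_torsion_part[OF subgrp] f] by auto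
  finally show ?thesis .
qed

lemma torsion_endo_extends:
  assumes f: "endo_on (torsion_part G) f"
  obtains F where "endo_on G F" and "\<And>p g. prime p \<Longrightarrow> g \<in> G \<Longrightarrow> proj p (F g) = f (proj p g)"
    and "\<And>t. t \<in> torsion_part G \<Longrightarrow> F t = f t"
proof -
  have "\<exists>h. h \<in> G \<and> (\<forall>p. prime p \<longrightarrow> proj p h = f (proj p g))" if g: "g \<in> G" for g
  proof -
    have "f (proj p g) \<in> primary_part p G" if "prime p" for p
      using torsion_endo_primary_part[OF f that proj_in_primary_part(1)[OF that g]] .
    from proj_surj[of "\<lambda>p. f (proj p g)", OF this] show ?thesis by blast
  qed
  then have "\<forall>g\<in>G. \<exists>h. h \<in> G \<and> (\<forall>p. prime p \<longrightarrow> proj p h = f (proj p g))" by blast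
  from bchoice[OF this] obtain F
    where F: "\<forall>g\<in>G. F g \<in> G \<and> (\<forall>p. prime p \<longrightarrow> proj p (F g) = f (proj p g))" ..
  have "F (x + y) = F x + F y" if x: "x \<in> G" and y: "y \<in> G" for x y
  proof (rule proj_inject)
    show "F (x + y) \<in> G" "F x + F y \<in> G" using F x y subgrp_add[OF subgrp] by auto
    fix p :: nat assume p: "prime p"
    have "proj p (F (x + y)) = f (proj p x + proj p y)"
      using F subgrp_add[OF subgrp x y] proj_add[OF p x y] p by simp
    also have "\<dots> = f (proj p x) + f (proj p y)"
      using endo_on_add[OF f] proj_in_torsion_part[OF p] x y by blast
    also have "\<dots> = proj p (F x + F y)" using F x y proj_add[OF p] p by simp
    finally show "proj p (F (x + y)) = proj p (F x + F y)" .
  qed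
  then have "endo_on G F" unfolding endo_on_def using F by blast
  moreover have "F t = f t" if t: "t \<in> torsion_part G" for t
  proof (rule proj_inject)
    have t_in: "t \<in> G" using t torsion_part_subset by blast
    show "F t \<in> G" "f t \<in> G" using F t_in endo_on_in[OF f t] torsion_part_subset by auto
    show "proj p (F t) = proj p (f t)" if "prime p" for p
      using F t_in proj_torsion_endo[OF f that t] that by simp
  qed
  ultimately show ?thesis using that F by blast
qed

lemma strongly_coHopfian_if_torsion_part:
  assumes "strongly_coHopfian (torsion_part G)"
  shows "strongly_coHopfian G"
  unfolding strongly_coHopfian_def
proof (intro allI impI)
  fix f assume f: "endo_on G f"
  obtain N where N: "(f ^^ N) ` torsion_part G = (f ^^ Suc N) ` torsion_part G"
    using assms endo_on_torsion_part[OF subgrp f] unfolding strongly_coHopfian_def by blast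
  have fN: "endo_on G (f ^^ n)" for n using endo_on_funpow[OF f] .
  have "(f ^^ N) ` G \<subseteq> (f ^^ Suc N) ` G"
  proof
    fix x assume "x \<in> (f ^^ N) ` G"
    then obtain g where g: "g \<in> G" "x = (f ^^ N) g" by auto
    have x_in: "x \<in> G" using g endo_on_in[OF fN] by blast
    have "\<exists>y. y \<in> primary_part p G \<and> proj p x = (f ^^ Suc N) y" if p: "prime p" for p
    proof -
      have "proj p x \<in> (f ^^ N) ` torsion_part G"
        using proj_endo[OF p fN g(1)] g(2) proj_in_torsion_part[OF p g(1)] by simp
      then obtain t where t: "t \<in> torsion_part G" "proj p x = (f ^^ Suc N) t"
        unfolding N by auto
      have t_in: "t \<in> G" using t torsion_part_subset by blast
      have "proj p x = proj p (proj p x)" using proj_proj[OF p p x_in] by simp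
      also have "\<dots> = (f ^^ Suc N) (proj p t)" by (simp only: t(2) proj_endo[OF p fN t_in])
      finally show ?thesis using proj_in_primary_part(1)[OF p t_in] by blast
    qed
    then have "\<forall>p. \<exists>y. prime p \<longrightarrow> y \<in> primary_part p G \<and> proj p x = (f ^^ Suc N) y"
      by blast
    from choice[OF this] obtain y
      where y: "\<And>p. prime p \<Longrightarrow> y p \<in> primary_part p G \<and> proj p x = (f ^^ Suc N) (y p)"
      by blast
    obtain h where h: "h \<in> G" "\<And>p. prime p \<Longrightarrow> proj p h = y p"
      using proj_surj[of y] y by blast
    have "(f ^^ Suc N) h = x"
    proof (rule proj_inject[OF endo_on_in[OF fN h(1)] x_in])
      fix p :: nat assume p: "prime p"
      show "proj p ((f ^^ Suc N) h) = proj p x"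
        by (simp only: proj_endo[OF p fN h(1)] h(2)[OF p] y[OF p, THEN conjunct2])
    qed
    then show "x \<in> (f ^^ Suc N) ` G" using h(1) by blast
  qed
  then show "\<exists>n. (f ^^ n) ` G = (f ^^ Suc n) ` G"
    using endo_on_image_funpow_Suc_subset[OF f, of N] by blast
qed

lemma strongly_coHopfian_torsion_part:
  assumes "strongly_coHopfian G"
  shows "strongly_coHopfian (torsion_part G)"
  unfolding strongly_coHopfian_def
proof (intro allI impI)
  fix f assume f: "endo_on (torsion_part G) f"
  define T where "T = torsion_part G"
  have T: "subgrp T" "T \<subseteq> G" unfolding T_def by (simp_all add: subgrp_torsion_part[OF subgrp] torsion_part_subset)
  have fN: "endo_on T (f ^^ n)" for n using endo_on_funpow f unfolding T_def by blast
  obtain F where F: "endo_on G F" and proj_F: "\<And>p g. prime p \<Longrightarrow> g \<in> G \<Longrightarrow> proj p (F g) = f (proj p g)"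
    and F_f: "\<And>t. t \<in> T \<Longrightarrow> F t = f t"
    using torsion_endo_extends[OF f] unfolding T_def by blast
  obtain N where N: "(F ^^ N) ` G = (F ^^ Suc N) ` G"
    using assms F unfolding strongly_coHopfian_def by blast
  have proj_Fn: "proj p ((F ^^ n) g) = (f ^^ n) (proj p g)" if p: "prime p" and g: "g \<in> G" for p n g
    by (induction n) (simp_all add: proj_F[OF p] endo_on_in[OF endo_on_funpow[OF F] g])
  have Fn_fn: "(F ^^ n) t = (f ^^ n) t" if t: "t \<in> T" for t n
    by (induction n) (simp_all add: F_f endo_on_in[OF fN t])
  have "(f ^^ N) ` T \<subseteq> (f ^^ Suc N) ` T"
  proof
    fix x assume "x \<in> (f ^^ N) ` T"
    then obtain t where t: "t \<in> T" "x = (f ^^ N) t" by auto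
    then have "x = (F ^^ N) t" using Fn_fn by simp
    then have "x \<in> (F ^^ N) ` G" using t(1) T(2) by blast
    then have "x \<in> (F ^^ Suc N) ` G" unfolding N .
    then obtain g where g: "g \<in> G" "x = (F ^^ Suc N) g" by blast
    have "x \<in> torsion_part G" using endo_on_in[OF fN t(1)] t(2) unfolding T_def by simp
    then obtain P where P: "finite P" "\<forall>q\<in>P. prime q" "x = (\<Sum>q\<in>P. proj q x)"
      using torsion_eq_sum_proj by blast
    have proj_T: "proj q g \<in> T" if "q \<in> P" for q
      using proj_in_torsion_part P(2) that g(1) unfolding T_def by blast
    have proj_x: "proj q x = (f ^^ Suc N) (proj q g)" if "q \<in> P" for q
      unfolding g(2) using proj_Fn[OF _ g(1)] P(2) that by blast
    have "x = (\<Sum>q\<in>P. proj q x)" by (rule P(3))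
    also have "\<dots> = (\<Sum>q\<in>P. (f ^^ Suc N) (proj q g))" by (rule sum.cong[OF refl proj_x])
    also have "\<dots> = (f ^^ Suc N) (\<Sum>q\<in>P. proj q g)"
      by (rule endo_on_sum[OF T(1) fN proj_T, symmetric])
    finally show "x \<in> (f ^^ Suc N) ` T"
      using subgrp_sum[OF T(1) proj_T] by (rule rev_image_eqI[rotated])
  qed
  then show "\<exists>n. (f ^^ n) ` torsion_part G = (f ^^ Suc n) ` torsion_part G"
    using endo_on_image_funpow_Suc_subset[OF f, of N] unfolding T_def by blast
qed

end

theorem mainTheorem8:
  fixes G :: "'a::ab_group_add set"
  assumes "subgrp G" and "reduced G" and "cotorsion G" and "adjusted G"
  shows "strongly_coHopfian G \<longleftrightarrow> strongly_coHopfian (torsion_part G)"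
proof -
  have Ext: "Ext_Q_vanishes G" using assms(3) unfolding cotorsion_def by blast
  show ?thesis
  proof
    assume sG: "strongly_coHopfian G"
    interpret split_reduced_cotorsion G
      using split_reduced_cotorsion.intro[OF assms(1,2) Ext]
        strongly_coHopfian_primary_split[OF assms(1,2) sG] .
    show "strongly_coHopfian (torsion_part G)" using strongly_coHopfian_torsion_part[OF sG] .
  next
    assume sT: "strongly_coHopfian (torsion_part G)"
    have bounded: "\<exists>k. \<forall>t\<in>primary_part q G. natmul (q ^ k) t = 0" if q: "prime q" for q
      using strongly_coHopfian_primary_part_bounded[OF subgrp_torsion_part[OF assms(1)]
          reduced_subset[OF assms(2) torsion_part_subset] sT q]
      unfolding primary_part_torsion_part[OF q] .
    interpret split_reduced_cotorsion G
      using split_reduced_cotorsion.intro[OF assms(1,2) Ext]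
        adjusted_primary_split[OF assms(1,2) Ext assms(4) bounded] .
    show "strongly_coHopfian G" using strongly_coHopfian_if_torsion_part[OF sT] .
  qed
qed

end
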